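(* Let $(\Delta,R)$ be a gentle quiver, $\rho=(\alpha,\beta)\in R$ an isolated relation, and $(\Delta',R')$ the quiver with relations obtained from $(\Delta,R)$ by completing $\rho$. Then: (1) $(\Delta',R')$ is a gentle quiver if and only if $\mathbb Z\cdot\rho\neq\{\rho\}$ (here $\mathbb Z\cdot\rho$ is the $\Phi$-orbit of $\rho$ in $\mathcal N$). (2) If $\mathbb Z\cdot\rho\ne\{\rho\}$, then $\mathcal N_{(\Delta',R')}=\mathcal N_{(\Delta,R)}\setminus\{\rho\}$ and \[ \mathcal N_{(\Delta',R')}/\mathbb Z = \{\mathcal O'\in\mathcal N_{(\Delta,R)}/\mathbb Z \mid \mathcal O'\ne\mathbb Z\cdot\rho\}\cup\{(\mathbb Z\cdot\rho)\setminus\{\rho\}\}; \] moreover $\mathcal C_{(\Delta',R')}=\mathcal C_{(\Delta,R)}\cup\{\alpha,\beta,\gamma_\rho\}$ and $\mathcal C_{(\Delta',R')}/\mathbb Z=\mathcal C_{(\Delta,R)}/\mathbb Z\cup\{\{\alpha,\beta,\gamma_\rho\}\}$.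
   Context: A quiver $\Delta$ has finite vertex set $\Delta_0$, arrow set $\Delta_1$, maps $s,t$. A path of length $n\ge1$ is $(\alpha_1,\dots,\alpha_n)$ with $s\alpha_i=t\alpha_{i+1}$. A gentle quiver is $(\Delta,R)$ with $\Delta$ connected, $R$ a set of paths of length 2, such that: (1) each vertex is start of at most two arrows and end of at most two arrows; (2) for each arrow $\alpha$ at most one $\beta$ with $s\beta=t\alpha$, $(\beta,\alpha)\notin R$ and at most one $\gamma$ with $t\gamma=s\alpha$, $(\alpha,\gamma)\notin R$; (3) for each $\alpha$ at most one $\beta$ with $(\beta,\alpha)\in R$ and at most one $\gamma$ with $(\alpha,\gamma)\in R$; (4) for some $n$ every path of length $n$ has a subpath in $R$. Fix $\sigma,\tau:\Delta_1\to\{\pm1\}$ with distinct arrows of same start having opposite $\sigma$, distinct arrows of same end opposite $\tau$, and for $s\alpha=t\beta$: $(\alpha,\beta)\in R$ iff $\sigma\alpha=\tau\beta$; $\sigma\omega=\sigma\alpha_n,\tau\omega=\tau\alpha_1$. Permitted paths: no consecutive pair in $R$, plus trivial $1_{x,\varepsilon}$ ($s=t=x$, $\sigma=\varepsilon,\tau=-\varepsilon$); maximal if no arrow $\alpha$ with $s\alpha=t\omega,\sigma\alpha=-\tau\omega$ and no $\beta$ with $t\beta=s\omega,\tau\beta=-\sigma\omega$; set $\mathcal M$. Antipaths: all consecutive pairs in $R$, plus trivial $1'_{x,\varepsilon}$ ($\sigma=\tau=\varepsilon$); maximal if no $\alpha$ with $s\alpha=t\omega,\sigma\alpha=\tau\omega$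 and no $\beta$ with $t\beta=s\omega,\tau\beta=\sigma\omega$; set $\mathcal N$. $\phi:\mathcal M\to\mathcal N$, $\omega\mapsto$ unique $\omega'$ with $t\omega'=t\omega,\tau\omega'=-\tau\omega$; $\psi:\mathcal N\to\mathcal M$, $\omega\mapsto$ unique $\omega'$ with $s\omega'=s\omega,\sigma\omega'=-\sigma\omega$; $\Phi=\phi\psi$ acting on $\mathcal N$, orbit set $\mathcal N/\mathbb Z$. $\mathcal C$: arrows $\alpha$ with $(\alpha)$ not a subpath of a maximal antipath; $\Psi:\mathcal C\to\mathcal C$, $\alpha\mapsto$ unique $\beta\in\mathcal C$ with $t\beta=s\alpha,\tau\beta=\sigma\alpha$; orbit set $\mathcal C/\mathbb Z$. Subscripts indicate the gentle quiver these sets are formed in. A relation $(\alpha,\beta)\in R$ is isolated if the path $(\alpha,\beta)$ belongs to $\mathcal N$. For a set $R_0$ of isolated relations, the quiver obtained by completing the relations from $R_0$ is $(\Delta',R')$ with $\Delta'_0=\Delta_0$, $\Delta'_1=\Delta_1\cup\{\gamma_\rho\mid\rho\in R_0\}$ with new arrows $\gamma_\rho$, where for $\rho=(\alpha,\beta)$ the arrow $\gamma_\rho$ goes from $t\alpha$ to $s\beta$, and $R'=R\cup\{(\gamma_\rho,\alpha),(\beta,\gamma_\rho)\mid \rho=(\alpha,\beta)\in R_0\}$. *)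

theory Defs
  imports Main
begin

text \<open>A quiver with relations: vertices, arrows, source, target, relations
  (paths of length two, written (a,b) meaning the path a after b, i.e. src a = tgt b).\<close>
record ('v,'a) quiv =
  verts :: "'v set"
  arrs  :: "'a set"
  src   :: "'a \<Rightarrow> 'v"
  tgt   :: "'a \<Rightarrow> 'v"
  rels  :: "('a \<times> 'a) set"

definition at_most_one :: "('x \<Rightarrow> bool) \<Rightarrow> bool" where
  "at_most_one P \<longleftrightarrow> (\<forall>x y. P x \<and> P y \<longrightarrow> x = y)"

definition is_path :: "('v,'a) quiv \<Rightarrow> 'a list \<Rightarrow> bool" where
  "is_path Q ws \<longleftrightarrow> ws \<noteq> [] \<and> set ws \<subseteq> arrs Q \<and>
     (\<forall>i. Suc i < length ws \<longrightarrow> src Q (ws ! i) = tgt Q (ws ! Suc i))"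

definition connected_quiv :: "('v,'a) quiv \<Rightarrow> bool" where
  "connected_quiv Q \<longleftrightarrow> (\<forall>x\<in>verts Q. \<forall>y\<in>verts Q.
     (x, y) \<in> ({(src Q a, tgt Q a) | a. a \<in> arrs Q} \<union> {(tgt Q a, src Q a) | a. a \<in> arrs Q})\<^sup>*)"

definition gentle :: "('v,'a) quiv \<Rightarrow> bool" where
  "gentle Q \<longleftrightarrow>
     finite (verts Q) \<and>
     (\<forall>a\<in>arrs Q. src Q a \<in> verts Q \<and> tgt Q a \<in> verts Q) \<and>
     connected_quiv Q \<and>
     (\<forall>(a,b)\<in>rels Q. is_path Q [a, b]) \<and>
     (\<forall>x\<in>verts Q. finite {a\<in>arrs Q. src Q a = x} \<and> card {a\<in>arrs Q. src Q a = x} \<le> 2 \<and>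
                   finite {a\<in>arrs Q. tgt Q a = x} \<and> card {a\<in>arrs Q. tgt Q a = x} \<le> 2) \<and>
     (\<forall>a\<in>arrs Q.
        at_most_one (\<lambda>b. b \<in> arrs Q \<and> src Q b = tgt Q a \<and> (b, a) \<notin> rels Q) \<and>
        at_most_one (\<lambda>c. c \<in> arrs Q \<and> tgt Q c = src Q a \<and> (a, c) \<notin> rels Q)) \<and>
     (\<forall>a\<in>arrs Q. at_most_one (\<lambda>b. (b, a) \<in> rels Q) \<and> at_most_one (\<lambda>c. (a, c) \<in> rels Q)) \<and>
     (\<exists>n\<ge>1. \<forall>ws. is_path Q ws \<and> length ws = n \<longrightarrow>
        (\<exists>i. Suc i < n \<and> (ws ! i, ws ! Suc i) \<in> rels Q))"

definition sign_fns :: "('v,'a) quiv \<Rightarrow> ('a \<Rightarrow> int) \<Rightarrow> ('a \<Rightarrow> int) \<Rightarrow> bool" where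
  "sign_fns Q \<sigma> \<tau> \<longleftrightarrow>
     (\<forall>a\<in>arrs Q. \<sigma> a \<in> {1, -1} \<and> \<tau> a \<in> {1, -1}) \<and>
     (\<forall>a\<in>arrs Q. \<forall>b\<in>arrs Q. a \<noteq> b \<and> src Q a = src Q b \<longrightarrow> \<sigma> a = - \<sigma> b) \<and>
     (\<forall>a\<in>arrs Q. \<forall>b\<in>arrs Q. a \<noteq> b \<and> tgt Q a = tgt Q b \<longrightarrow> \<tau> a = - \<tau> b) \<and>
     (\<forall>a\<in>arrs Q. \<forall>b\<in>arrs Q. src Q a = tgt Q b \<longrightarrow> ((a, b) \<in> rels Q \<longleftrightarrow> \<sigma> a = \<tau> b))"

text \<open>Paths: trivial permitted paths 1_{x,e}, trivial antipaths 1'_{x,e}, and nontrivial paths.\<close>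
datatype ('v,'a) gpath = PTriv 'v int | ATriv 'v int | Path "'a list"

fun gsrc :: "('v,'a) quiv \<Rightarrow> ('v,'a) gpath \<Rightarrow> 'v" where
  "gsrc Q (PTriv x e) = x"
| "gsrc Q (ATriv x e) = x"
| "gsrc Q (Path ws) = src Q (last ws)"

fun gtgt :: "('v,'a) quiv \<Rightarrow> ('v,'a) gpath \<Rightarrow> 'v" where
  "gtgt Q (PTriv x e) = x"
| "gtgt Q (ATriv x e) = x"
| "gtgt Q (Path ws) = tgt Q (hd ws)"

fun gsig :: "('a \<Rightarrow> int) \<Rightarrow> ('v,'a) gpath \<Rightarrow> int" where
  "gsig \<sigma> (PTriv x e) = e"
| "gsig \<sigma> (ATriv x e) = e"
| "gsig \<sigma> (Path ws) = \<sigma> (last ws)"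

fun gtau :: "('a \<Rightarrow> int) \<Rightarrow> ('v,'a) gpath \<Rightarrow> int" where
  "gtau \<tau> (PTriv x e) = - e"
| "gtau \<tau> (ATriv x e) = e"
| "gtau \<tau> (Path ws) = \<tau> (hd ws)"

definition permitted :: "('v,'a) quiv \<Rightarrow> ('v,'a) gpath \<Rightarrow> bool" where
  "permitted Q p = (case p of
      PTriv x e \<Rightarrow> x \<in> verts Q \<and> e \<in> {1, -1}
    | ATriv x e \<Rightarrow> False
    | Path ws \<Rightarrow> is_path Q ws \<and> (\<forall>i. Suc i < length ws \<longrightarrow> (ws ! i, ws ! Suc i) \<notin> rels Q))"

definition antipath :: "('v,'a) quiv \<Rightarrow> ('v,'a) gpath \<Rightarrow> bool" where
  "antipath Q p = (case p of
      PTriv x e \<Rightarrow> False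
    | ATriv x e \<Rightarrow> x \<in> verts Q \<and> e \<in> {1, -1}
    | Path ws \<Rightarrow> is_path Q ws \<and> (\<forall>i. Suc i < length ws \<longrightarrow> (ws ! i, ws ! Suc i) \<in> rels Q))"

text \<open>Maximal permitted paths (the set M) and maximal antipaths (the set N).\<close>
definition Mset :: "('v,'a) quiv \<Rightarrow> ('a \<Rightarrow> int) \<Rightarrow> ('a \<Rightarrow> int) \<Rightarrow> ('v,'a) gpath set" where
  "Mset Q \<sigma> \<tau> = {p. permitted Q p \<and>
      \<not> (\<exists>a\<in>arrs Q. src Q a = gtgt Q p \<and> \<sigma> a = - gtau \<tau> p) \<and>
      \<not> (\<exists>b\<in>arrs Q. tgt Q b = gsrc Q p \<and> \<tau> b = - gsig \<sigma> p)}"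

definition Nset :: "('v,'a) quiv \<Rightarrow> ('a \<Rightarrow> int) \<Rightarrow> ('a \<Rightarrow> int) \<Rightarrow> ('v,'a) gpath set" where
  "Nset Q \<sigma> \<tau> = {p. antipath Q p \<and>
      \<not> (\<exists>a\<in>arrs Q. src Q a = gtgt Q p \<and> \<sigma> a = gtau \<tau> p) \<and>
      \<not> (\<exists>b\<in>arrs Q. tgt Q b = gsrc Q p \<and> \<tau> b = gsig \<sigma> p)}"

definition phi :: "('v,'a) quiv \<Rightarrow> ('a \<Rightarrow> int) \<Rightarrow> ('a \<Rightarrow> int) \<Rightarrow> ('v,'a) gpath \<Rightarrow> ('v,'a) gpath" where
  "phi Q \<sigma> \<tau> p = (THE q. q \<in> Nset Q \<sigma> \<tau> \<and> gtgt Q q = gtgt Q p \<and> gtau \<tau> q = - gtau \<tau> p)"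

definition psi :: "('v,'a) quiv \<Rightarrow> ('a \<Rightarrow> int) \<Rightarrow> ('a \<Rightarrow> int) \<Rightarrow> ('v,'a) gpath \<Rightarrow> ('v,'a) gpath" where
  "psi Q \<sigma> \<tau> p = (THE q. q \<in> Mset Q \<sigma> \<tau> \<and> gsrc Q q = gsrc Q p \<and> gsig \<sigma> q = - gsig \<sigma> p)"

definition Phi :: "('v,'a) quiv \<Rightarrow> ('a \<Rightarrow> int) \<Rightarrow> ('a \<Rightarrow> int) \<Rightarrow> ('v,'a) gpath \<Rightarrow> ('v,'a) gpath" where
  "Phi Q \<sigma> \<tau> = phi Q \<sigma> \<tau> \<circ> psi Q \<sigma> \<tau>"

definition orbit_on :: "'x set \<Rightarrow> ('x \<Rightarrow> 'x) \<Rightarrow> 'x \<Rightarrow> 'x set" where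
  "orbit_on A f x = {y \<in> A. \<exists>n. (f ^^ n) x = y \<or> (f ^^ n) y = x}"

definition Norbits :: "('v,'a) quiv \<Rightarrow> ('a \<Rightarrow> int) \<Rightarrow> ('a \<Rightarrow> int) \<Rightarrow> ('v,'a) gpath set set" where
  "Norbits Q \<sigma> \<tau> = (\<lambda>x. orbit_on (Nset Q \<sigma> \<tau>) (Phi Q \<sigma> \<tau>) x) ` Nset Q \<sigma> \<tau>"

definition Cset :: "('v,'a) quiv \<Rightarrow> ('a \<Rightarrow> int) \<Rightarrow> ('a \<Rightarrow> int) \<Rightarrow> 'a set" where
  "Cset Q \<sigma> \<tau> = {a \<in> arrs Q. \<not> (\<exists>ws us vs. Path ws \<in> Nset Q \<sigma> \<tau> \<and> ws = us @ [a] @ vs)}"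

definition Psi :: "('v,'a) quiv \<Rightarrow> ('a \<Rightarrow> int) \<Rightarrow> ('a \<Rightarrow> int) \<Rightarrow> 'a \<Rightarrow> 'a" where
  "Psi Q \<sigma> \<tau> a = (THE b. b \<in> Cset Q \<sigma> \<tau> \<and> tgt Q b = src Q a \<and> \<tau> b = \<sigma> a)"

definition Corbits :: "('v,'a) quiv \<Rightarrow> ('a \<Rightarrow> int) \<Rightarrow> ('a \<Rightarrow> int) \<Rightarrow> 'a set set" where
  "Corbits Q \<sigma> \<tau> = (\<lambda>x. orbit_on (Cset Q \<sigma> \<tau>) (Psi Q \<sigma> \<tau>) x) ` Cset Q \<sigma> \<tau>"

definition isolated :: "('v,'a) quiv \<Rightarrow> ('a \<Rightarrow> int) \<Rightarrow> ('a \<Rightarrow> int) \<Rightarrow> 'a \<Rightarrow> 'a \<Rightarrow> bool" where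
  "isolated Q \<sigma> \<tau> a b \<longleftrightarrow> (a, b) \<in> rels Q \<and> Path [a, b] \<in> Nset Q \<sigma> \<tau>"

definition complete :: "('v,'a) quiv \<Rightarrow> 'a \<Rightarrow> 'a \<Rightarrow> 'a \<Rightarrow> ('v,'a) quiv" where
  "complete Q a b g = Q\<lparr> arrs := insert g (arrs Q),
                         src := (src Q)(g := tgt Q a),
                         tgt := (tgt Q)(g := src Q b),
                         rels := rels Q \<union> {(g, a), (b, g)} \<rparr>"

end

theory Submission
  imports Defs
begin

text \<open>
  Since \<open>\<rho> = (\<alpha>, \<beta>)\<close> is an isolated relation, \<open>\<alpha>\<close> and \<open>\<beta>\<close> lie on no maximal antipath other than
  \<open>\<rho>\<close>, and the new relations \<open>(\<gamma>, \<alpha>)\<close>, \<open>(\<beta>, \<gamma>)\<close> close \<open>\<alpha>, \<beta>, \<gamma>\<close> into a cycle of relations.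
  Hence completing \<open>\<rho>\<close> removes exactly the maximal antipath \<open>\<rho>\<close>, and \<open>\<alpha>, \<beta>, \<gamma>\<close> form one new
  \<open>\<Psi>\<close>-orbit.

  On the side of maximal permitted paths, \<open>\<gamma>\<close> joins the source end of \<open>\<psi> \<rho>\<close> to the target end of
  the maximal permitted path \<open>m\<close> with \<open>\<phi> m = \<rho>\<close>. So the new \<open>\<Phi>\<close> is \<open>\<Phi>\<close> with \<open>\<rho>\<close> skipped, which
  removes \<open>\<rho>\<close> from its orbit and leaves the other orbits alone. This breaks down exactly when
  these two paths coincide, i.e. when \<open>\<Phi> \<rho> = \<rho>\<close>: then \<open>\<gamma>\<close> together with \<open>\<psi> \<rho>\<close> is a cycle without
  relations, so the completion is not gentle. Otherwise every path without relations of the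
  completion meets \<open>\<gamma>\<close> at most once, since the stretch between two occurrences of \<open>\<gamma>\<close> would be a
  permitted path of the original quiver fitting \<open>\<gamma>\<close> at both ends, i.e. \<open>\<psi> \<rho>\<close> with \<open>\<phi> (\<psi> \<rho>) = \<rho>\<close>.
\<close>

section \<open>Chains in lists\<close>

lemma successively_eq_if_functional:
  assumes "successively P r" "successively P r'" "r \<noteq> []" "r' \<noteq> []" "hd r = hd r'"
    and "\<And>x y z. P x y \<Longrightarrow> P x z \<Longrightarrow> y = z"
    and "\<not> (\<exists>y. P (last r) y)" "\<not> (\<exists>y. P (last r') y)"
  shows "r = r'"
  using assms
proof (induction r arbitrary: r')
  case Nil then show ?case by simp
next
  case (Cons x xs)
  then obtain ys where r': "r' = x # ys" by (cases r') auto
  show ?case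
  proof (cases xs)
    case Nil
    then show ?thesis using Cons r' by (cases ys) auto
  next
    case (Cons u us)
    then obtain v vs where ys: "ys = v # vs" using Cons.prems r' by (cases ys) auto
    have "P x u" "P x v" using Cons.prems r' \<open>xs = u # us\<close> ys by auto
    then have "u = v" using Cons.prems(6) by blast
    have "xs = ys"
      by (rule Cons.IH) (use Cons.prems r' \<open>xs = u # us\<close> ys \<open>u = v\<close> in auto)
    then show ?thesis using r' by simp
  qed
qed

lemma ex_successively_length:
  assumes "\<And>r. successively P r \<Longrightarrow> r \<noteq> [] \<Longrightarrow> hd r = a \<Longrightarrow> \<exists>y. P (last r) y"
  shows "\<exists>r. successively P r \<and> r \<noteq> [] \<and> hd r = a \<and> length r = Suc k"
proof (induction k)
  case 0 then show ?case by (intro exI[of _ "[a]"]) auto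
next
  case (Suc k)
  then obtain r where r: "successively P r" "r \<noteq> []" "hd r = a" "length r = Suc k" by blast
  then obtain y where "P (last r) y" using assms by blast
  then show ?case using r
    by (intro exI[of _ "r @ [y]"]) (auto simp: successively_append_iff)
qed

lemma ex_maximal_successively:
  assumes "\<And>r. successively P r \<Longrightarrow> r \<noteq> [] \<Longrightarrow> hd r = a \<Longrightarrow> length r < n"
  shows "\<exists>r. successively P r \<and> r \<noteq> [] \<and> hd r = a \<and> \<not> (\<exists>y. P (last r) y)"
proof (rule ccontr)
  assume "\<not> ?thesis"
  then obtain r where "successively P r" "r \<noteq> []" "hd r = a" "length r = Suc n"
    using ex_successively_length[of P a n] by blast
  with assms[of r] show False by simp
qed

lemma successively_distinct:
  assumes "successively P r" "r \<noteq> []"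
    and inj: "\<And>x y z. P x z \<Longrightarrow> P y z \<Longrightarrow> x = y"
    and start: "\<not> (\<exists>c. P c (hd r))"
  shows "distinct r"
  using assms(1,2) start
proof (induction r rule: rev_induct)
  case Nil then show ?case by simp
next
  case (snoc y xs)
  show ?case
  proof (cases "xs = []")
    case True then show ?thesis by simp
  next
    case False
    have sx: "successively P xs" and Pl: "P (last xs) y"
      using snoc.prems(1) False by (auto simp: successively_append_iff)
    have hd: "hd (xs @ [y]) = hd xs" using False by simp
    have dx: "distinct xs" using snoc.IH[OF sx False] snoc.prems(3) hd by simp
    have "y \<notin> set xs"
    proof
      assume "y \<in> set xs"
      then obtain k where k: "k < length xs" "xs ! k = y" by (auto simp: in_set_conv_nth)
      show False
      proof (cases k)
        case 0
        then have "hd xs = y" using k False by (simp add: hd_conv_nth)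
        then show False using snoc.prems(3) Pl hd by metis
      next
        case (Suc j)
        have "P (xs ! j) (xs ! k)" using successively_nth[OF sx, of j] k Suc by simp
        then have "xs ! j = xs ! (length xs - 1)" using Pl k(2) inj False by (metis last_conv_nth)
        then have "j = length xs - 1" using dx k Suc by (simp add: nth_eq_iff_index_eq)
        then show False using k Suc by simp
      qed
    qed
    then show ?thesis using dx by simp
  qed
qed

lemma successively_set_subset:
  "successively P r \<Longrightarrow> r \<noteq> [] \<Longrightarrow> hd r \<in> A \<Longrightarrow> (\<And>u v. P u v \<Longrightarrow> v \<in> A) \<Longrightarrow> set r \<subseteq> A"
  by (induction r rule: induct_list012) auto

lemma successively_last_in:
  "successively P ws \<Longrightarrow> x \<in> set ws \<Longrightarrow> x \<in> S \<Longrightarrow> (\<And>u v. P u v \<Longrightarrow> u \<in> S \<Longrightarrow> v \<in> S) \<Longrightarrow>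
   last ws \<in> S"
proof (induction ws arbitrary: x rule: induct_list012)
  case (3 u v vs)
  then have "\<exists>y\<in>set (v # vs). y \<in> S" by auto
  then obtain y where "y \<in> set (v # vs)" "y \<in> S" by blast
  then have "last (v # vs) \<in> S" using "3.IH"(2) "3.prems"(1,4) by simp
  then show ?case by simp
qed simp_all

lemma successively_cyclic_nth:
  assumes "successively P xs" "xs \<noteq> []" "P (last xs) (hd xs)"
  shows "P (xs ! (i mod length xs)) (xs ! (Suc i mod length xs))"
proof (cases "Suc (i mod length xs) < length xs")
  case True
  then have "Suc i mod length xs = Suc (i mod length xs)" by (simp add: mod_Suc)
  then show ?thesis using successively_nth[OF assms(1) True] by simp
next
  case False
  then have k: "Suc (i mod length xs) = length xs" using assms(2) by (simp add: Suc_leI le_antisym)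
  then have "Suc i mod length xs = 0" by (simp add: mod_Suc)
  moreover have "xs ! (i mod length xs) = last xs" using k assms(2) by (metis diff_Suc_1 last_conv_nth)
  ultimately show ?thesis using assms(2,3) by (simp add: hd_conv_nth)
qed

lemma ex_maximal_successively_finite:
  assumes "finite A" "a \<in> A" "\<And>u v. P u v \<Longrightarrow> v \<in> A"
    and "\<And>x y z. P x z \<Longrightarrow> P y z \<Longrightarrow> x = y" "\<not> (\<exists>c. P c a)"
  shows "\<exists>r. successively P r \<and> r \<noteq> [] \<and> hd r = a \<and> \<not> (\<exists>y. P (last r) y) \<and> set r \<subseteq> A"
proof -
  have "length r < Suc (card A)" if r: "successively P r" "r \<noteq> []" "hd r = a" for r
  proof -
    have "distinct r" using successively_distinct[OF r(1,2)] assms(4,5) r(3) by blast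
    moreover have "set r \<subseteq> A" using successively_set_subset[OF r(1,2)] assms(2,3) r(3) by blast
    ultimately show ?thesis using assms(1) by (metis card_mono distinct_card less_Suc_eq_le)
  qed
  then obtain r where "successively P r" "r \<noteq> []" "hd r = a" "\<not> (\<exists>y. P (last r) y)"
    using ex_maximal_successively[of P a "Suc (card A)"] by blast
  then show ?thesis using successively_set_subset[of P r A] assms(2,3) by blast
qed

section \<open>Orbits of a permutation of a finite set\<close>

definition reach :: "('x \<Rightarrow> 'x) \<Rightarrow> 'x \<Rightarrow> 'x \<Rightarrow> bool" where
  "reach f x y \<longleftrightarrow> (\<exists>n. (f ^^ n) x = y)"

lemma orbit_on_reach: "orbit_on A f x = {y \<in> A. reach f x y \<or> reach f y x}"
  unfolding orbit_on_def reach_def by auto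

lemma reach_refl [simp]: "reach f x x"
  unfolding reach_def by (intro exI[of _ 0]) simp

lemma reach_step: "reach f x y \<Longrightarrow> reach f x (f y)"
  unfolding reach_def by (metis funpow.simps(2) o_apply)

lemma reach_trans: "reach f x y \<Longrightarrow> reach f y z \<Longrightarrow> reach f x z"
  unfolding reach_def by (metis funpow_add o_apply)

locale finite_perm =
  fixes A :: "'x set" and f :: "'x \<Rightarrow> 'x"
  assumes finite: "finite A" and maps: "\<And>x. x \<in> A \<Longrightarrow> f x \<in> A" and inj: "inj_on f A"
begin

lemma funpow_in: "x \<in> A \<Longrightarrow> (f ^^ n) x \<in> A"
  by (induction n) (auto intro: maps)

lemma inj_on_funpow: "inj_on (f ^^ n) A"
proof (induction n)
  case 0 then show ?case by simp
next
  case (Suc n)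
  show ?case
    unfolding funpow.simps(2) by (rule comp_inj_on[OF Suc]) (use inj funpow_in in \<open>auto intro: inj_on_subset\<close>)
qed

lemma ex_period: assumes "x \<in> A" shows "\<exists>d>0. (f ^^ d) x = x"
proof -
  have "\<not> inj_on (\<lambda>n. (f ^^ n) x) {0..card A}"
  proof
    assume i: "inj_on (\<lambda>n. (f ^^ n) x) {0..card A}"
    have "(\<lambda>n. (f ^^ n) x) ` {0..card A} \<subseteq> A" using funpow_in assms by auto
    then have "card ((\<lambda>n. (f ^^ n) x) ` {0..card A}) \<le> card A" using finite by (simp add: card_mono)
    then show False using card_image[OF i] by simp
  qed
  then obtain i j where ij: "i < j" "(f ^^ i) x = (f ^^ j) x"
    unfolding inj_on_def by (metis linorder_neqE_nat)
  then have "(f ^^ i) x = (f ^^ i) ((f ^^ (j - i)) x)"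
    by (metis add_diff_inverse_nat funpow_add less_imp_not_less o_apply)
  then have "x = (f ^^ (j - i)) x" using inj_on_funpow[of i] assms funpow_in by (meson inj_onD)
  then show ?thesis using ij by (intro exI[of _ "j - i"]) auto
qed

lemma reach_sym: assumes "y \<in> A" "reach f y x" shows "reach f x y"
proof -
  obtain n where n: "(f ^^ n) y = x" using assms unfolding reach_def by blast
  obtain d where d: "d > 0" "(f ^^ d) y = y" using ex_period assms(1) by blast
  have "(f ^^ (d * k)) y = y" for k
    by (induction k) (simp_all add: funpow_add d(2))
  moreover have "d * n \<ge> n" using d by simp
  then have "(f ^^ (d * n - n)) x = (f ^^ (d * n)) y"
    using n by (metis funpow_add le_add_diff_inverse2 o_apply)
  ultimately show ?thesis unfolding reach_def by metis
qed

lemma orbit_on_eq_reach: assumes "x \<in> A" shows "orbit_on A f x = {y \<in> A. reach f x y}"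
  unfolding orbit_on_reach using reach_sym by blast

lemma orbit_on_eq_if_mem:
  assumes "x \<in> A" "y \<in> orbit_on A f x" shows "orbit_on A f y = orbit_on A f x"
proof -
  have y: "y \<in> A" "reach f x y" using assms orbit_on_eq_reach by auto
  have yx: "reach f y x" using reach_sym[OF assms(1)] y by blast
  have "reach f y z \<longleftrightarrow> reach f x z" for z
    using reach_trans[OF y(2), of z] reach_trans[OF yx, of z] by blast
  then show ?thesis using orbit_on_eq_reach[OF assms(1)] orbit_on_eq_reach[OF y(1)] by blast
qed

lemma orbit_on_self: "x \<in> A \<Longrightarrow> x \<in> orbit_on A f x"
  unfolding orbit_on_reach by simp

lemma orbit_on_eq_singleton_iff: assumes "x \<in> A" shows "orbit_on A f x = {x} \<longleftrightarrow> f x = x"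
proof
  assume "orbit_on A f x = {x}"
  moreover have "f x \<in> orbit_on A f x" using assms maps orbit_on_eq_reach reach_step[OF reach_refl] by auto
  ultimately show "f x = x" by auto
next
  assume fx: "f x = x"
  have "(f ^^ n) x = x" for n by (induction n) (auto simp: fx)
  then show "orbit_on A f x = {x}" using orbit_on_eq_reach[OF assms] assms unfolding reach_def by auto
qed

end

locale perm_skip = finite_perm +
  fixes r :: 'x and g :: "'x \<Rightarrow> 'x"
  assumes r: "r \<in> A" and fr: "f r \<noteq> r"
    and g: "\<And>x. x \<in> A - {r} \<Longrightarrow> g x = (if f x = r then f r else f x)"
begin

lemma g_maps: assumes "x \<in> A - {r}" shows "g x \<in> A - {r}"
  using g[OF assms] maps[OF r] maps assms fr by (cases "f x = r") auto

lemma reach_g: assumes "x \<in> A - {r}" shows "reach f x (g x)"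
  using g[OF assms] reach_step[OF reach_refl, of f x] reach_step[OF reach_step[OF reach_refl], of f x]
  by (cases "f x = r") simp_all

lemma reach_funpow_g: assumes "x \<in> A - {r}" shows "(g ^^ n) x \<in> A - {r} \<and> reach f x ((g ^^ n) x)"
proof (induction n)
  case 0 then show ?case using assms by simp
next
  case (Suc n)
  then have "(g ^^ n) x \<in> A - {r}" "reach f x ((g ^^ n) x)" by auto
  then show ?case using g_maps reach_trans[OF _ reach_g] by simp
qed

lemma reach_g_if_reach_f:
  assumes "x \<in> A - {r}" shows "y \<in> A - {r} \<Longrightarrow> (f ^^ n) x = y \<Longrightarrow> reach g x y"
proof (induction n arbitrary: y rule: less_induct)
  case (less n)
  show ?case
  proof (cases n)
    case 0
    then show ?thesis using less.prems by simp
  next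
    case (Suc m)
    define z where "z = (f ^^ m) x"
    have zA: "z \<in> A" using funpow_in assms z_def by auto
    have fz: "f z = y" using less.prems(2) Suc z_def by simp
    show ?thesis
    proof (cases "z = r")
      case False
      have "m < n" using Suc by simp
      then have "reach g x z" using less.IH[of m z] zA False z_def by blast
      then have "reach g x (g z)" by (rule reach_step)
      moreover have "g z = y" using g[of z] False zA fz less.prems(1) by auto
      ultimately show ?thesis by simp
    next
      case True
      have "m \<noteq> 0"
      proof
        assume "m = 0"
        then show False using True assms z_def by simp
      qed
      then obtain k where k: "m = Suc k" by (cases m) auto
      define w where "w = (f ^^ k) x"
      have wA: "w \<in> A" using funpow_in assms w_def by auto
      have fw: "f w = r" using True z_def w_def k by simp
      have "w \<noteq> r" using fw fr by auto
      have "k < n" using Suc k by simp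
      then have "reach g x w" using less.IH[of k w] wA \<open>w \<noteq> r\<close> w_def by blast
      then have "reach g x (g w)" by (rule reach_step)
      moreover have "g w = y" using g[of w] \<open>w \<noteq> r\<close> wA fw fz True by auto
      ultimately show ?thesis by simp
    qed
  qed
qed

lemma reach_g_iff: assumes "x \<in> A - {r}" "y \<in> A - {r}" shows "reach g x y \<longleftrightarrow> reach f x y"
proof
  assume "reach g x y"
  then obtain n where "(g ^^ n) x = y" unfolding reach_def by blast
  then show "reach f x y" using reach_funpow_g[OF assms(1), of n] by simp
next
  assume "reach f x y"
  then obtain n where "(f ^^ n) x = y" unfolding reach_def by blast
  then show "reach g x y" using reach_g_if_reach_f[OF assms] by simp
qed

lemma orbit_on_skip: assumes "x \<in> A - {r}" shows "orbit_on (A - {r}) g x = orbit_on A f x - {r}"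
proof -
  have "y \<in> orbit_on (A - {r}) g x \<longleftrightarrow> y \<in> orbit_on A f x - {r}" for y
  proof (cases "y \<in> A - {r}")
    case True
    then show ?thesis
      unfolding orbit_on_reach using reach_g_iff[OF assms True] reach_g_iff[OF True assms] by simp
  qed (auto simp: orbit_on_reach)
  then show ?thesis by blast
qed

lemma orbit_on_skip_if_notin:
  assumes "x \<in> A" "r \<notin> orbit_on A f x" shows "orbit_on (A - {r}) g x = orbit_on A f x"
  using assms orbit_on_skip orbit_on_self[OF assms(1)] by auto

lemma orbit_on_skip_r: "orbit_on (A - {r}) g (f r) = orbit_on A f r - {r}"
proof -
  have frA: "f r \<in> A - {r}" using maps r fr by auto
  have "f r \<in> orbit_on A f r" using orbit_on_eq_reach[OF r] maps[OF r] reach_step[OF reach_refl] by auto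
  then have "orbit_on A f (f r) = orbit_on A f r" using orbit_on_eq_if_mem r by blast
  then show ?thesis using orbit_on_skip[OF frA] by simp
qed

lemma orbits_skip:
  "(\<lambda>x. orbit_on (A - {r}) g x) ` (A - {r}) =
     {O' \<in> (\<lambda>x. orbit_on A f x) ` A. O' \<noteq> orbit_on A f r} \<union> {orbit_on A f r - {r}}"
proof (intro equalityI subsetI)
  fix O' assume "O' \<in> (\<lambda>x. orbit_on (A - {r}) g x) ` (A - {r})"
  then obtain x where x: "x \<in> A - {r}" "O' = orbit_on (A - {r}) g x" by blast
  show "O' \<in> {O' \<in> (\<lambda>x. orbit_on A f x) ` A. O' \<noteq> orbit_on A f r} \<union> {orbit_on A f r - {r}}"
  proof (cases "r \<in> orbit_on A f x")
    case True
    then have "orbit_on A f r = orbit_on A f x" using orbit_on_eq_if_mem x(1) by simp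
    then show ?thesis using x orbit_on_skip by simp
  next
    case False
    then have "orbit_on A f x \<noteq> orbit_on A f r" using orbit_on_self[OF r] by auto
    then show ?thesis using x False orbit_on_skip_if_notin by auto
  qed
next
  fix O' assume "O' \<in> {O' \<in> (\<lambda>x. orbit_on A f x) ` A. O' \<noteq> orbit_on A f r} \<union> {orbit_on A f r - {r}}"
  then consider "O' = orbit_on A f r - {r}" | x where "x \<in> A" "O' = orbit_on A f x" "O' \<noteq> orbit_on A f r"
    by auto
  then show "O' \<in> (\<lambda>x. orbit_on (A - {r}) g x) ` (A - {r})"
  proof cases
    case 1
    then show ?thesis using orbit_on_skip_r maps r fr by blast
  next
    case (2 x)
    then have "r \<notin> orbit_on A f x" using orbit_on_eq_if_mem by metis
    then show ?thesis using 2 orbit_on_skip_if_notin orbit_on_self by blast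
  qed
qed

end

section \<open>Signed quivers\<close>

lemma permitted_Path_iff:
  "permitted Q (Path ws) \<longleftrightarrow> ws \<noteq> [] \<and> set ws \<subseteq> arrs Q \<and>
     successively (\<lambda>a b. src Q a = tgt Q b \<and> (a, b) \<notin> rels Q) ws"
  unfolding permitted_def is_path_def successively_conv_nth by auto

lemma antipath_Path_iff:
  "antipath Q (Path ws) \<longleftrightarrow> ws \<noteq> [] \<and> set ws \<subseteq> arrs Q \<and>
     successively (\<lambda>a b. src Q a = tgt Q b \<and> (a, b) \<in> rels Q) ws"
  unfolding antipath_def is_path_def successively_conv_nth by auto

lemma is_path_iff_successively:
  "is_path Q ws \<longleftrightarrow> ws \<noteq> [] \<and> set ws \<subseteq> arrs Q \<and> successively (\<lambda>a b. src Q a = tgt Q b) ws"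
  unfolding is_path_def successively_conv_nth by blast

lemma mem_Nset_iff:
  "p \<in> Nset Q \<sigma> \<tau> \<longleftrightarrow> antipath Q p \<and>
     \<not> (\<exists>a\<in>arrs Q. src Q a = gtgt Q p \<and> \<sigma> a = gtau \<tau> p) \<and>
     \<not> (\<exists>b\<in>arrs Q. tgt Q b = gsrc Q p \<and> \<tau> b = gsig \<sigma> p)"
  unfolding Nset_def by simp

lemma mem_Mset_iff:
  "p \<in> Mset Q \<sigma> \<tau> \<longleftrightarrow> permitted Q p \<and>
     \<not> (\<exists>a\<in>arrs Q. src Q a = gtgt Q p \<and> \<sigma> a = - gtau \<tau> p) \<and>
     \<not> (\<exists>b\<in>arrs Q. tgt Q b = gsrc Q p \<and> \<tau> b = - gsig \<sigma> p)"
  unfolding Mset_def by simp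

definition permitted_step :: "('v,'a) quiv \<Rightarrow> 'a \<Rightarrow> 'a \<Rightarrow> bool" where
  "permitted_step Q a b \<longleftrightarrow> a \<in> arrs Q \<and> b \<in> arrs Q \<and> src Q a = tgt Q b \<and> (a, b) \<notin> rels Q"

lemma permitted_Path_iff_steps:
  "permitted Q (Path ws) \<longleftrightarrow> ws \<noteq> [] \<and> set ws \<subseteq> arrs Q \<and> successively (permitted_step Q) ws"
proof -
  have "set ws \<subseteq> arrs Q \<Longrightarrow> successively (\<lambda>a b. src Q a = tgt Q b \<and> (a, b) \<notin> rels Q) ws =
      successively (permitted_step Q) ws"
    by (rule successively_cong) (auto simp: permitted_step_def)
  then show ?thesis unfolding permitted_Path_iff by blast
qed

locale signed_quiver =
  fixes Q :: "('v,'a) quiv" and \<sigma> \<tau> :: "'a \<Rightarrow> int"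
  assumes sign_fns: "sign_fns Q \<sigma> \<tau>"
    and rels_arrows: "\<And>a b. (a, b) \<in> rels Q \<Longrightarrow> a \<in> arrs Q \<and> b \<in> arrs Q \<and> src Q a = tgt Q b"
    and arrow_ends: "\<And>a. a \<in> arrs Q \<Longrightarrow> src Q a \<in> verts Q \<and> tgt Q a \<in> verts Q"
begin

lemma sigma_sign: "a \<in> arrs Q \<Longrightarrow> \<sigma> a \<in> {1, -1}"
  and tau_sign: "a \<in> arrs Q \<Longrightarrow> \<tau> a \<in> {1, -1}"
  using sign_fns unfolding sign_fns_def by auto

lemma arrow_eq_if_src_sigma_eq:
  assumes "a \<in> arrs Q" "b \<in> arrs Q" "src Q a = src Q b" "\<sigma> a = \<sigma> b" shows "a = b"
proof (rule ccontr)
  assume "a \<noteq> b"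
  then have "\<sigma> a = - \<sigma> b" using assms sign_fns unfolding sign_fns_def by blast
  then show False using assms(4) sigma_sign[OF assms(1)] by auto
qed

lemma arrow_eq_if_tgt_tau_eq:
  assumes "a \<in> arrs Q" "b \<in> arrs Q" "tgt Q a = tgt Q b" "\<tau> a = \<tau> b" shows "a = b"
proof (rule ccontr)
  assume "a \<noteq> b"
  then have "\<tau> a = - \<tau> b" using assms sign_fns unfolding sign_fns_def by blast
  then show False using assms(4) tau_sign[OF assms(1)] by auto
qed

lemma rels_iff: "(a, b) \<in> rels Q \<longleftrightarrow> a \<in> arrs Q \<and> b \<in> arrs Q \<and> src Q a = tgt Q b \<and> \<sigma> a = \<tau> b"
  using rels_arrows[of a b] sign_fns unfolding sign_fns_def by blast

lemma not_rels_iff: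
  "a \<in> arrs Q \<Longrightarrow> b \<in> arrs Q \<Longrightarrow> src Q a = tgt Q b \<Longrightarrow> (a, b) \<notin> rels Q \<longleftrightarrow> \<sigma> a = - \<tau> b"
  using rels_iff[of a b] sigma_sign[of a] tau_sign[of b] by auto

lemma rels_right_unique: "(x, y) \<in> rels Q \<Longrightarrow> (x, z) \<in> rels Q \<Longrightarrow> y = z"
  using rels_iff arrow_eq_if_tgt_tau_eq by metis

lemma rels_left_unique: "(x, z) \<in> rels Q \<Longrightarrow> (y, z) \<in> rels Q \<Longrightarrow> x = y"
  using rels_iff arrow_eq_if_src_sigma_eq by metis

lemma permitted_step_iff:
  "permitted_step Q a b \<longleftrightarrow> a \<in> arrs Q \<and> b \<in> arrs Q \<and> src Q a = tgt Q b \<and> \<sigma> a = - \<tau> b"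
  unfolding permitted_step_def using not_rels_iff by blast

lemma permitted_step_right_unique: "permitted_step Q x y \<Longrightarrow> permitted_step Q x z \<Longrightarrow> y = z"
  unfolding permitted_step_iff by (auto intro: arrow_eq_if_tgt_tau_eq)

lemma permitted_step_left_unique: "permitted_step Q x z \<Longrightarrow> permitted_step Q y z \<Longrightarrow> x = y"
  unfolding permitted_step_iff by (auto intro: arrow_eq_if_src_sigma_eq)

lemma antipath_Path_iff_rels:
  "antipath Q (Path ws) \<longleftrightarrow> ws \<noteq> [] \<and> set ws \<subseteq> arrs Q \<and> successively (\<lambda>a b. (a, b) \<in> rels Q) ws"
proof -
  have eq: "(\<lambda>a b. src Q a = tgt Q b \<and> (a, b) \<in> rels Q) = (\<lambda>a b. (a, b) \<in> rels Q)"
    using rels_iff by (intro ext) blast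
  show ?thesis unfolding antipath_Path_iff eq by (rule refl)
qed

lemma Path_in_Nset_iff:
  "Path ws \<in> Nset Q \<sigma> \<tau> \<longleftrightarrow> ws \<noteq> [] \<and> set ws \<subseteq> arrs Q \<and>
     successively (\<lambda>a b. (a, b) \<in> rels Q) ws \<and>
     \<not> (\<exists>a. (a, hd ws) \<in> rels Q) \<and> \<not> (\<exists>b. (last ws, b) \<in> rels Q)"
proof -
  have "(\<exists>a\<in>arrs Q. src Q a = tgt Q (hd ws) \<and> \<sigma> a = \<tau> (hd ws)) \<longleftrightarrow> (\<exists>a. (a, hd ws) \<in> rels Q)"
    if "hd ws \<in> arrs Q" using that rels_iff by blast
  moreover have "(\<exists>b\<in>arrs Q. tgt Q b = src Q (last ws) \<and> \<tau> b = \<sigma> (last ws)) \<longleftrightarrow>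
      (\<exists>b. (last ws, b) \<in> rels Q)"
    if "last ws \<in> arrs Q" using that rels_iff by (metis (no_types, lifting))
  moreover have "ws \<noteq> [] \<Longrightarrow> set ws \<subseteq> arrs Q \<Longrightarrow> hd ws \<in> arrs Q \<and> last ws \<in> arrs Q" by auto
  ultimately show ?thesis unfolding mem_Nset_iff antipath_Path_iff_rels by auto
qed

lemma Path_in_Mset_iff:
  "Path ws \<in> Mset Q \<sigma> \<tau> \<longleftrightarrow> ws \<noteq> [] \<and> set ws \<subseteq> arrs Q \<and>
     successively (permitted_step Q) ws \<and>
     \<not> (\<exists>a. permitted_step Q a (hd ws)) \<and> \<not> (\<exists>b. permitted_step Q (last ws) b)"
proof -
  have "(\<exists>a\<in>arrs Q. src Q a = tgt Q (hd ws) \<and> \<sigma> a = - \<tau> (hd ws)) \<longleftrightarrow>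
      (\<exists>a. permitted_step Q a (hd ws))"
    if "hd ws \<in> arrs Q" using that permitted_step_iff by blast
  moreover have "(\<exists>b\<in>arrs Q. tgt Q b = src Q (last ws) \<and> \<tau> b = - \<sigma> (last ws)) \<longleftrightarrow>
      (\<exists>b. permitted_step Q (last ws) b)"
    if "last ws \<in> arrs Q" using that permitted_step_iff by (metis equation_minus_iff)
  moreover have "ws \<noteq> [] \<Longrightarrow> set ws \<subseteq> arrs Q \<Longrightarrow> hd ws \<in> arrs Q \<and> last ws \<in> arrs Q" by auto
  ultimately show ?thesis unfolding mem_Mset_iff permitted_Path_iff_steps by auto
qed

lemma ATriv_in_Nset_iff:
  "ATriv x e \<in> Nset Q \<sigma> \<tau> \<longleftrightarrow> x \<in> verts Q \<and> e \<in> {1, -1} \<and>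
     \<not> (\<exists>a\<in>arrs Q. src Q a = x \<and> \<sigma> a = e) \<and> \<not> (\<exists>b\<in>arrs Q. tgt Q b = x \<and> \<tau> b = e)"
  unfolding Nset_def antipath_def by auto

lemma PTriv_in_Mset_iff:
  "PTriv x e \<in> Mset Q \<sigma> \<tau> \<longleftrightarrow> x \<in> verts Q \<and> e \<in> {1, -1} \<and>
     \<not> (\<exists>a\<in>arrs Q. src Q a = x \<and> \<sigma> a = e) \<and> \<not> (\<exists>b\<in>arrs Q. tgt Q b = x \<and> \<tau> b = - e)"
  unfolding Mset_def permitted_def by auto

lemma PTriv_notin_Nset: "PTriv x e \<notin> Nset Q \<sigma> \<tau>"
  and ATriv_notin_Mset: "ATriv x e \<notin> Mset Q \<sigma> \<tau>"
  unfolding Nset_def Mset_def antipath_def permitted_def by simp_all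


lemma Path_in_Nset_ends: "Path ws \<in> Nset Q \<sigma> \<tau> \<Longrightarrow> hd ws \<in> arrs Q \<and> last ws \<in> arrs Q"
  unfolding Path_in_Nset_iff by auto

lemma Path_in_Mset_ends: "Path ws \<in> Mset Q \<sigma> \<tau> \<Longrightarrow> hd ws \<in> arrs Q \<and> last ws \<in> arrs Q"
  unfolding Path_in_Mset_iff by auto

lemma Nset_unique_tgt:
  assumes p: "p \<in> Nset Q \<sigma> \<tau>" and p': "p' \<in> Nset Q \<sigma> \<tau>"
    and "gtgt Q p = gtgt Q p'" "gtau \<tau> p = gtau \<tau> p'"
  shows "p = p'"
proof (cases "\<exists>ws ws'. p = Path ws \<and> p' = Path ws'")
  case True
  then obtain ws ws' where ws: "p = Path ws" "p' = Path ws'" by blast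
  have "hd ws = hd ws'"
    using assms Path_in_Nset_ends arrow_eq_if_tgt_tau_eq unfolding ws by simp
  then have "ws = ws'"
    using p p' rels_right_unique unfolding ws Path_in_Nset_iff
    by (intro successively_eq_if_functional[where P = "\<lambda>a b. (a, b) \<in> rels Q"]) auto
  then show ?thesis using ws by simp
next
  case False
  then show ?thesis using assms Path_in_Nset_ends
    by (cases p; cases p') (auto simp: mem_Nset_iff antipath_def)
qed

lemma Nset_unique_src:
  assumes p: "p \<in> Nset Q \<sigma> \<tau>" and p': "p' \<in> Nset Q \<sigma> \<tau>"
    and "gsrc Q p = gsrc Q p'" "gsig \<sigma> p = gsig \<sigma> p'"
  shows "p = p'"
proof (cases "\<exists>ws ws'. p = Path ws \<and> p' = Path ws'")
  case True
  then obtain ws ws' where ws: "p = Path ws" "p' = Path ws'" by blast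
  have "last ws = last ws'"
    using assms Path_in_Nset_ends arrow_eq_if_src_sigma_eq unfolding ws by simp
  then have "rev ws = rev ws'"
    using p p' rels_left_unique unfolding ws Path_in_Nset_iff
    by (intro successively_eq_if_functional[where P = "\<lambda>a b. (b, a) \<in> rels Q"])
      (auto simp: hd_rev last_rev)
  then show ?thesis using ws by simp
next
  case False
  then show ?thesis using assms Path_in_Nset_ends
    by (cases p; cases p') (auto simp: mem_Nset_iff antipath_def)
qed

lemma Mset_unique_tgt:
  assumes p: "p \<in> Mset Q \<sigma> \<tau>" and p': "p' \<in> Mset Q \<sigma> \<tau>"
    and "gtgt Q p = gtgt Q p'" "gtau \<tau> p = gtau \<tau> p'"
  shows "p = p'"
proof (cases "\<exists>ws ws'. p = Path ws \<and> p' = Path ws'")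
  case True
  then obtain ws ws' where ws: "p = Path ws" "p' = Path ws'" by blast
  have "hd ws = hd ws'"
    using assms Path_in_Mset_ends arrow_eq_if_tgt_tau_eq unfolding ws by simp
  then have "ws = ws'"
    using p p' permitted_step_right_unique unfolding ws Path_in_Mset_iff
    by (intro successively_eq_if_functional[where P = "permitted_step Q"]) auto
  then show ?thesis using ws by simp
next
  case False
  then show ?thesis using assms Path_in_Mset_ends
    by (cases p; cases p') (auto simp: mem_Mset_iff permitted_def)
qed

lemma Mset_unique_src:
  assumes p: "p \<in> Mset Q \<sigma> \<tau>" and p': "p' \<in> Mset Q \<sigma> \<tau>"
    and "gsrc Q p = gsrc Q p'" "gsig \<sigma> p = gsig \<sigma> p'"
  shows "p = p'"
proof (cases "\<exists>ws ws'. p = Path ws \<and> p' = Path ws'")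
  case True
  then obtain ws ws' where ws: "p = Path ws" "p' = Path ws'" by blast
  have "last ws = last ws'"
    using assms Path_in_Mset_ends arrow_eq_if_src_sigma_eq unfolding ws by simp
  then have "rev ws = rev ws'"
    using p p' permitted_step_left_unique unfolding ws Path_in_Mset_iff
    by (intro successively_eq_if_functional[where P = "\<lambda>a b. permitted_step Q b a"])
      (auto simp: hd_rev last_rev)
  then show ?thesis using ws by simp
next
  case False
  then show ?thesis using assms Path_in_Mset_ends
    by (cases p; cases p') (auto simp: mem_Mset_iff permitted_def)
qed

lemma Nset_ports:
  assumes "p \<in> Nset Q \<sigma> \<tau>"
  shows "gsrc Q p \<in> verts Q \<and> gtgt Q p \<in> verts Q \<and> gsig \<sigma> p \<in> {1, -1} \<and> gtau \<tau> p \<in> {1, -1}"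
proof (cases p)
  case (Path ws)
  then show ?thesis using assms Path_in_Nset_ends arrow_ends sigma_sign tau_sign by auto
qed (use assms in \<open>auto simp: mem_Nset_iff antipath_def\<close>)

lemma Mset_ports:
  assumes "p \<in> Mset Q \<sigma> \<tau>"
  shows "gsrc Q p \<in> verts Q \<and> gtgt Q p \<in> verts Q \<and> gsig \<sigma> p \<in> {1, -1} \<and> gtau \<tau> p \<in> {1, -1}"
proof (cases p)
  case (Path ws)
  then show ?thesis using assms Path_in_Mset_ends arrow_ends sigma_sign tau_sign by auto
qed (use assms in \<open>auto simp: mem_Mset_iff permitted_def\<close>)

lemma finite_Nset: assumes "finite (verts Q)" shows "finite (Nset Q \<sigma> \<tau>)"
proof -
  have "inj_on (\<lambda>p. (gsrc Q p, gsig \<sigma> p)) (Nset Q \<sigma> \<tau>)"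
    using Nset_unique_src by (auto simp: inj_on_def)
  moreover have "(\<lambda>p. (gsrc Q p, gsig \<sigma> p)) ` Nset Q \<sigma> \<tau> \<subseteq> verts Q \<times> {1, -1}"
    using Nset_ports by auto
  ultimately show ?thesis using assms
    by (meson finite.emptyI finite.insertI finite_SigmaI finite_imageD finite_subset)
qed

text \<open>The maps \<open>\<phi>\<close> and \<open>\<psi>\<close> are well defined: the antipath (resp. permitted path) sought is the
  maximal chain of relations (resp. of permitted steps) starting from the unique arrow at the
  given vertex with the given sign, or a trivial one if there is no such arrow.\<close>

lemma ex_Nset_opposite_tgt:
  assumes "q \<in> Mset Q \<sigma> \<tau>" and fin: "finite (arrs Q)"
  shows "\<exists>p\<in>Nset Q \<sigma> \<tau>. gtgt Q p = gtgt Q q \<and> gtau \<tau> p = - gtau \<tau> q"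
proof -
  define y f where "y = gtgt Q q" "f = gtau \<tau> q"
  have no_out: "\<not> (\<exists>a\<in>arrs Q. src Q a = y \<and> \<sigma> a = - f)" using assms(1) by (simp add: mem_Mset_iff y_f_def)
  have yf: "y \<in> verts Q" "f \<in> {1, -1}" using Mset_ports[OF assms(1)] y_f_def by auto
  show ?thesis
  proof (cases "\<exists>a\<in>arrs Q. tgt Q a = y \<and> \<tau> a = - f")
    case True
    then obtain a where a: "a \<in> arrs Q" "tgt Q a = y" "\<tau> a = - f" by blast
    have "\<not> (\<exists>c. (c, a) \<in> rels Q)" using no_out a rels_iff by auto
    then obtain r where r: "successively (\<lambda>u v. (u, v) \<in> rels Q) r" "r \<noteq> []" "hd r = a"
        "\<not> (\<exists>z. (last r, z) \<in> rels Q)" "set r \<subseteq> arrs Q"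
      using ex_maximal_successively_finite[OF fin a(1), of "\<lambda>u v. (u, v) \<in> rels Q"]
        rels_iff rels_left_unique by blast
    have "Path r \<in> Nset Q \<sigma> \<tau>" using r \<open>\<not> (\<exists>c. (c, a) \<in> rels Q)\<close> Path_in_Nset_iff by auto
    then show ?thesis using r a y_f_def by (intro bexI[of _ "Path r"]) auto
  next
    case False
    have "ATriv y (- f) \<in> Nset Q \<sigma> \<tau>" using False no_out yf by (auto simp: ATriv_in_Nset_iff)
    then show ?thesis using y_f_def by (intro bexI[of _ "ATriv y (- f)"]) auto
  qed
qed

lemma ex_Mset_opposite_src:
  assumes "p \<in> Nset Q \<sigma> \<tau>"
    and bounded: "\<And>ws. set ws \<subseteq> arrs Q \<Longrightarrow> successively (permitted_step Q) ws \<Longrightarrow> length ws < n"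
  shows "\<exists>q\<in>Mset Q \<sigma> \<tau>. gsrc Q q = gsrc Q p \<and> gsig \<sigma> q = - gsig \<sigma> p"
proof -
  define x e where "x = gsrc Q p" "e = gsig \<sigma> p"
  have no_in: "\<not> (\<exists>b\<in>arrs Q. tgt Q b = x \<and> \<tau> b = e)" using assms(1) by (simp add: mem_Nset_iff x_e_def)
  have xe: "x \<in> verts Q" "e \<in> {1, -1}" using Nset_ports[OF assms(1)] x_e_def by auto
  show ?thesis
  proof (cases "\<exists>a\<in>arrs Q. src Q a = x \<and> \<sigma> a = - e")
    case True
    then obtain a where a: "a \<in> arrs Q" "src Q a = x" "\<sigma> a = - e" by blast
    have in_arrs: "set r \<subseteq> arrs Q" if "successively (\<lambda>u v. permitted_step Q v u) r" "r \<noteq> []" "hd r = a" for r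
      by (rule successively_set_subset[OF that(1,2)]) (use a that(3) in \<open>auto simp: permitted_step_def\<close>)
    have "\<exists>r. successively (\<lambda>u v. permitted_step Q v u) r \<and> r \<noteq> [] \<and> hd r = a \<and>
        \<not> (\<exists>z. permitted_step Q z (last r))"
      by (rule ex_maximal_successively[where n = n]) (use bounded[of "rev _"] in_arrs in auto)
    then obtain r where r: "successively (\<lambda>u v. permitted_step Q v u) r" "r \<noteq> []" "hd r = a"
        "\<not> (\<exists>z. permitted_step Q z (last r))" by blast
    moreover have "\<not> (\<exists>b. permitted_step Q a b)" using no_in a permitted_step_iff by auto
    ultimately have "Path (rev r) \<in> Mset Q \<sigma> \<tau>"
      using in_arrs Path_in_Mset_iff by (auto simp: hd_rev last_rev)
    then show ?thesis using r a x_e_def by (intro bexI[of _ "Path (rev r)"]) (auto simp: last_rev)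
  next
    case False
    have "PTriv x (- e) \<in> Mset Q \<sigma> \<tau>" using False no_in xe by (auto simp: PTriv_in_Mset_iff)
    then show ?thesis using x_e_def by (intro bexI[of _ "PTriv x (- e)"]) auto
  qed
qed

lemma mem_Cset_iff: "a \<in> Cset Q \<sigma> \<tau> \<longleftrightarrow> a \<in> arrs Q \<and> (\<forall>ws. Path ws \<in> Nset Q \<sigma> \<tau> \<longrightarrow> a \<notin> set ws)"
  unfolding Cset_def by (auto simp: in_set_conv_decomp)

text \<open>An arrow of \<open>\<C>\<close> has a successor in relation, since otherwise the maximal chain of
  relations ending in it would be a maximal antipath through it.\<close>

lemma ex_Cset_Psi_value:
  assumes "a \<in> Cset Q \<sigma> \<tau>" and fin: "finite (arrs Q)"
  shows "\<exists>b. b \<in> Cset Q \<sigma> \<tau> \<and> tgt Q b = src Q a \<and> \<tau> b = \<sigma> a"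
proof -
  have a: "a \<in> arrs Q" "\<And>ws. Path ws \<in> Nset Q \<sigma> \<tau> \<Longrightarrow> a \<notin> set ws" using assms mem_Cset_iff by auto
  have "\<exists>b. (a, b) \<in> rels Q"
  proof (rule ccontr)
    assume no_succ: "\<not> (\<exists>b. (a, b) \<in> rels Q)"
    then obtain r where r: "successively (\<lambda>u v. (v, u) \<in> rels Q) r" "r \<noteq> []" "hd r = a"
        "\<not> (\<exists>z. (z, last r) \<in> rels Q)" "set r \<subseteq> arrs Q"
      using ex_maximal_successively_finite[OF fin a(1), of "\<lambda>u v. (v, u) \<in> rels Q"]
        rels_iff rels_right_unique by blast
    then have "Path (rev r) \<in> Nset Q \<sigma> \<tau>" using no_succ Path_in_Nset_iff by (auto simp: hd_rev last_rev)
    moreover have "a \<in> set (rev r)" using r by auto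
    ultimately show False using a by blast
  qed
  then obtain b where b: "(a, b) \<in> rels Q" by blast
  have "b \<notin> set ws" if ws: "Path ws \<in> Nset Q \<sigma> \<tau>" for ws
  proof
    assume "b \<in> set ws"
    then obtain us vs where ws_eq: "ws = us @ b # vs" by (auto simp: in_set_conv_decomp)
    have chain: "successively (\<lambda>a b. (a, b) \<in> rels Q) ws" "\<not> (\<exists>a. (a, hd ws) \<in> rels Q)"
      using ws Path_in_Nset_iff by auto
    show False
    proof (cases "us = []")
      case True then show False using chain(2) ws_eq b by simp
    next
      case False
      then have "(last us, b) \<in> rels Q" using chain(1) ws_eq by (simp add: successively_append_iff)
      then have "last us = a" using b rels_left_unique by blast
      then have "a \<in> set ws" using ws_eq False last_in_set by fastforce
      then show False using a ws by blast
    qed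
  qed
  then show ?thesis using b rels_iff mem_Cset_iff by auto
qed

lemma psi_eqI:
  assumes "p \<in> Nset Q \<sigma> \<tau>" "q \<in> Mset Q \<sigma> \<tau>" "gsrc Q q = gsrc Q p" "gsig \<sigma> q = - gsig \<sigma> p"
  shows "psi Q \<sigma> \<tau> p = q"
  unfolding psi_def
proof (rule the_equality)
  show "q \<in> Mset Q \<sigma> \<tau> \<and> gsrc Q q = gsrc Q p \<and> gsig \<sigma> q = - gsig \<sigma> p" using assms by simp
  fix q' assume "q' \<in> Mset Q \<sigma> \<tau> \<and> gsrc Q q' = gsrc Q p \<and> gsig \<sigma> q' = - gsig \<sigma> p"
  then show "q' = q" using Mset_unique_src[of q' q] assms by simp
qed

lemma phi_eqI:
  assumes "q \<in> Mset Q \<sigma> \<tau>" "p \<in> Nset Q \<sigma> \<tau>" "gtgt Q p = gtgt Q q" "gtau \<tau> p = - gtau \<tau> q"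
  shows "phi Q \<sigma> \<tau> q = p"
  unfolding phi_def
proof (rule the_equality)
  show "p \<in> Nset Q \<sigma> \<tau> \<and> gtgt Q p = gtgt Q q \<and> gtau \<tau> p = - gtau \<tau> q" using assms by simp
  fix p' assume "p' \<in> Nset Q \<sigma> \<tau> \<and> gtgt Q p' = gtgt Q q \<and> gtau \<tau> p' = - gtau \<tau> q"
  then show "p' = p" using Nset_unique_tgt[of p' p] assms by simp
qed

lemma Psi_eqI:
  assumes "b \<in> Cset Q \<sigma> \<tau>" "tgt Q b = src Q a" "\<tau> b = \<sigma> a"
  shows "Psi Q \<sigma> \<tau> a = b"
  unfolding Psi_def
proof (rule the_equality)
  show "b \<in> Cset Q \<sigma> \<tau> \<and> tgt Q b = src Q a \<and> \<tau> b = \<sigma> a" using assms by simp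
  fix b' assume "b' \<in> Cset Q \<sigma> \<tau> \<and> tgt Q b' = src Q a \<and> \<tau> b' = \<sigma> a"
  then show "b' = b" using arrow_eq_if_tgt_tau_eq[of b' b] assms mem_Cset_iff by auto
qed

end

definition arrows :: "('v,'a) gpath \<Rightarrow> 'a list" where
  "arrows p = (case p of Path ws \<Rightarrow> ws | _ \<Rightarrow> [])"

context signed_quiver
begin

lemma Mset_arrows_Nil:
  assumes "p \<in> Mset Q \<sigma> \<tau>" "arrows p = []"
  shows "p = PTriv (gsrc Q p) (gsig \<sigma> p) \<and> gtgt Q p = gsrc Q p \<and> gtau \<tau> p = - gsig \<sigma> p"
  using assms Path_in_Mset_iff ATriv_notin_Mset by (cases p) (auto simp: arrows_def)

lemma Mset_arrows_ne: "p \<in> Mset Q \<sigma> \<tau> \<Longrightarrow> arrows p \<noteq> [] \<Longrightarrow> p = Path (arrows p)"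
  by (cases p) (auto simp: arrows_def)

lemma Mset_arrows:
  assumes "p \<in> Mset Q \<sigma> \<tau>"
  shows "set (arrows p) \<subseteq> arrs Q" "successively (permitted_step Q) (arrows p)"
  using assms Path_in_Mset_iff by (cases p; simp add: arrows_def)+

end

section \<open>Gentle quivers\<close>

lemma gentle_finite_verts: "gentle Q \<Longrightarrow> finite (verts Q)"
  unfolding gentle_def by (elim conjE)

lemma gentle_arrow_ends: "gentle Q \<Longrightarrow> a \<in> arrs Q \<Longrightarrow> src Q a \<in> verts Q \<and> tgt Q a \<in> verts Q"
  unfolding gentle_def by (elim conjE) blast

lemma gentle_connected: "gentle Q \<Longrightarrow> connected_quiv Q"
  unfolding gentle_def by (elim conjE)

lemma gentle_rels_paths: "gentle Q \<Longrightarrow> (a, b) \<in> rels Q \<Longrightarrow> is_path Q [a, b]"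
  unfolding gentle_def by (elim conjE) blast

lemma gentle_finite_out: "gentle Q \<Longrightarrow> x \<in> verts Q \<Longrightarrow> finite {a\<in>arrs Q. src Q a = x}"
  unfolding gentle_def by (elim conjE) blast

lemma gentle_path_bound: "gentle Q \<Longrightarrow> \<exists>n\<ge>1. \<forall>ws. is_path Q ws \<and> length ws = n \<longrightarrow>
    (\<exists>i. Suc i < n \<and> (ws ! i, ws ! Suc i) \<in> rels Q)"
  unfolding gentle_def by (elim conjE)

lemma gentle_finite_arrs: assumes "gentle Q" shows "finite (arrs Q)"
proof -
  have "arrs Q \<subseteq> (\<Union>x\<in>verts Q. {a\<in>arrs Q. src Q a = x})" using gentle_arrow_ends[OF assms] by blast
  moreover have "finite (\<Union>x\<in>verts Q. {a\<in>arrs Q. src Q a = x})"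
    using gentle_finite_verts[OF assms] gentle_finite_out[OF assms] by blast
  ultimately show ?thesis by (rule finite_subset)
qed

lemma gentle_long_paths_have_rels:
  assumes "gentle Q"
  obtains n where "\<And>ws. is_path Q ws \<Longrightarrow> n \<le> length ws \<Longrightarrow> \<exists>i. Suc i < length ws \<and> (ws ! i, ws ! Suc i) \<in> rels Q"
proof -
  obtain n where n: "n \<ge> 1" "\<forall>ws. is_path Q ws \<and> length ws = n \<longrightarrow>
        (\<exists>i. Suc i < n \<and> (ws ! i, ws ! Suc i) \<in> rels Q)" using gentle_path_bound[OF assms] by blast
  have "\<exists>i. Suc i < length ws \<and> (ws ! i, ws ! Suc i) \<in> rels Q" if "is_path Q ws" "n \<le> length ws" for ws
  proof -
    have "is_path Q (take n ws)" using that n(1) unfolding is_path_def by (auto dest: in_set_takeD)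
    moreover have "length (take n ws) = n" using that by simp
    ultimately obtain i where "Suc i < n" "(take n ws ! i, take n ws ! Suc i) \<in> rels Q" using n by blast
    then show ?thesis using that by (intro exI[of _ i]) auto
  qed
  then show ?thesis using that by blast
qed

lemma not_gentle_if_permitted_cycle:
  assumes "successively (permitted_step Q) cyc" "cyc \<noteq> []" "permitted_step Q (last cyc) (hd cyc)"
  shows "\<not> gentle Q"
proof
  assume "gentle Q"
  then obtain n where n: "n \<ge> 1" "\<forall>ws. is_path Q ws \<and> length ws = n \<longrightarrow>
      (\<exists>i. Suc i < n \<and> (ws ! i, ws ! Suc i) \<in> rels Q)" using gentle_path_bound by blast
  define f where "f i = cyc ! (i mod length cyc)" for i
  have step: "permitted_step Q (f i) (f (Suc i))" for i
    using successively_cyclic_nth[OF assms] f_def by simp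
  define ws where "ws = map f [0..<n]"
  have "is_path Q ws" unfolding is_path_def ws_def using n(1) step unfolding permitted_step_def by auto
  then obtain i where "Suc i < n" "(ws ! i, ws ! Suc i) \<in> rels Q" using n(2) ws_def by auto
  then show False using step[of i] unfolding ws_def permitted_step_def by simp
qed

lemma gentle_permitted_paths_bounded:
  assumes "gentle Q"
  obtains n where "\<And>ws. set ws \<subseteq> arrs Q \<Longrightarrow> successively (permitted_step Q) ws \<Longrightarrow> length ws < n"
proof -
  obtain n0 where n0: "\<And>ws. is_path Q ws \<Longrightarrow> n0 \<le> length ws \<Longrightarrow>
      \<exists>i. Suc i < length ws \<and> (ws ! i, ws ! Suc i) \<in> rels Q"
    using gentle_long_paths_have_rels[OF assms] by blast
  have "length ws < Suc n0" if ws: "set ws \<subseteq> arrs Q" "successively (permitted_step Q) ws" for ws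
  proof (rule ccontr)
    assume "\<not> length ws < Suc n0"
    moreover have "successively (\<lambda>a b. src Q a = tgt Q b) ws"
      by (rule successively_mono[OF ws(2)]) (simp add: permitted_step_def)
    ultimately have "is_path Q ws" "n0 \<le> length ws" using ws(1) unfolding is_path_iff_successively by auto
    then obtain i where i: "Suc i < length ws" "(ws ! i, ws ! Suc i) \<in> rels Q" using n0 by blast
    then show False using successively_nth[OF ws(2) i(1)] by (simp add: permitted_step_def)
  qed
  then show ?thesis using that by blast
qed

context signed_quiver
begin

lemma card_arrows_from_le_2: "card {a\<in>arrs Q. src Q a = x} \<le> 2"
proof -
  have "inj_on \<sigma> {a\<in>arrs Q. src Q a = x}" using arrow_eq_if_src_sigma_eq by (auto simp: inj_on_def)
  moreover have "\<sigma> ` {a\<in>arrs Q. src Q a = x} \<subseteq> {1, -1}" using sigma_sign by auto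
  ultimately have "card {a\<in>arrs Q. src Q a = x} \<le> card {1::int, -1}" by (rule card_inj_on_le) simp
  then show ?thesis by simp
qed

lemma card_arrows_to_le_2: "card {a\<in>arrs Q. tgt Q a = x} \<le> 2"
proof -
  have "inj_on \<tau> {a\<in>arrs Q. tgt Q a = x}" using arrow_eq_if_tgt_tau_eq by (auto simp: inj_on_def)
  moreover have "\<tau> ` {a\<in>arrs Q. tgt Q a = x} \<subseteq> {1, -1}" using tau_sign by auto
  ultimately have "card {a\<in>arrs Q. tgt Q a = x} \<le> card {1::int, -1}" by (rule card_inj_on_le) simp
  then show ?thesis by simp
qed

lemma gentleI:
  assumes "finite (verts Q)" "finite (arrs Q)" "connected_quiv Q"
    and "\<exists>n\<ge>1. \<forall>ws. is_path Q ws \<and> length ws = n \<longrightarrow> (\<exists>i. Suc i < n \<and> (ws ! i, ws ! Suc i) \<in> rels Q)"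
  shows "gentle Q"
proof -
  have unique_pred: "at_most_one (\<lambda>b. b \<in> arrs Q \<and> src Q b = tgt Q a \<and> (b, a) \<notin> rels Q)"
    if "a \<in> arrs Q" for a
    unfolding at_most_one_def
  proof (intro allI impI)
    fix x y assume xy: "(x \<in> arrs Q \<and> src Q x = tgt Q a \<and> (x, a) \<notin> rels Q) \<and>
      (y \<in> arrs Q \<and> src Q y = tgt Q a \<and> (y, a) \<notin> rels Q)"
    then have "\<sigma> x = - \<tau> a" "\<sigma> y = - \<tau> a" using not_rels_iff that by auto
    then show "x = y" using arrow_eq_if_src_sigma_eq xy by auto
  qed
  have unique_succ: "at_most_one (\<lambda>c. c \<in> arrs Q \<and> tgt Q c = src Q a \<and> (a, c) \<notin> rels Q)"
    if "a \<in> arrs Q" for a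
    unfolding at_most_one_def
  proof (intro allI impI)
    fix x y assume xy: "(x \<in> arrs Q \<and> tgt Q x = src Q a \<and> (a, x) \<notin> rels Q) \<and>
      (y \<in> arrs Q \<and> tgt Q y = src Q a \<and> (a, y) \<notin> rels Q)"
    then have "\<sigma> a = - \<tau> x" "\<sigma> a = - \<tau> y" using not_rels_iff that by auto
    then show "x = y" using arrow_eq_if_tgt_tau_eq xy by auto
  qed
  have unique_rels: "at_most_one (\<lambda>b. (b, a) \<in> rels Q) \<and> at_most_one (\<lambda>c. (a, c) \<in> rels Q)" for a
    unfolding at_most_one_def using rels_left_unique rels_right_unique by blast
  have rels_paths: "\<forall>(a, b)\<in>rels Q. is_path Q [a, b]"
    using rels_iff unfolding is_path_def by auto
  have finite_deg: "finite {a\<in>arrs Q. src Q a = x}" "finite {a\<in>arrs Q. tgt Q a = x}" for x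
    using assms(2) by simp_all
  have ends: "\<forall>a\<in>arrs Q. src Q a \<in> verts Q \<and> tgt Q a \<in> verts Q" using arrow_ends by blast
  show ?thesis unfolding gentle_def
    using assms(1,3,4) ends rels_paths card_arrows_from_le_2 card_arrows_to_le_2 finite_deg
      unique_pred unique_succ unique_rels
    by blast
qed

end

locale gentle_signed_quiver =
  fixes Q :: "('v,'a) quiv" and \<sigma> \<tau> :: "'a \<Rightarrow> int"
  assumes gentle: "gentle Q" and gentle_sign_fns: "sign_fns Q \<sigma> \<tau>"

sublocale gentle_signed_quiver \<subseteq> signed_quiver
proof
  show "sign_fns Q \<sigma> \<tau>" by (rule gentle_sign_fns)
  show "(a, b) \<in> rels Q \<Longrightarrow> a \<in> arrs Q \<and> b \<in> arrs Q \<and> src Q a = tgt Q b" for a b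
    using gentle_rels_paths[OF gentle] unfolding is_path_def by auto
  show "a \<in> arrs Q \<Longrightarrow> src Q a \<in> verts Q \<and> tgt Q a \<in> verts Q" for a
    by (rule gentle_arrow_ends[OF gentle])
qed

context gentle_signed_quiver
begin

lemma psi_spec:
  assumes "p \<in> Nset Q \<sigma> \<tau>"
  shows "psi Q \<sigma> \<tau> p \<in> Mset Q \<sigma> \<tau> \<and> gsrc Q (psi Q \<sigma> \<tau> p) = gsrc Q p \<and> gsig \<sigma> (psi Q \<sigma> \<tau> p) = - gsig \<sigma> p"
proof -
  obtain n where "\<And>ws. set ws \<subseteq> arrs Q \<Longrightarrow> successively (permitted_step Q) ws \<Longrightarrow> length ws < n"
    using gentle_permitted_paths_bounded[OF gentle] by blast
  then obtain q where "q \<in> Mset Q \<sigma> \<tau>" "gsrc Q q = gsrc Q p" "gsig \<sigma> q = - gsig \<sigma> p"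
    using ex_Mset_opposite_src[OF assms] by blast
  then show ?thesis using psi_eqI[OF assms] by simp
qed

lemma phi_spec:
  assumes "q \<in> Mset Q \<sigma> \<tau>"
  shows "phi Q \<sigma> \<tau> q \<in> Nset Q \<sigma> \<tau> \<and> gtgt Q (phi Q \<sigma> \<tau> q) = gtgt Q q \<and> gtau \<tau> (phi Q \<sigma> \<tau> q) = - gtau \<tau> q"
proof -
  obtain p where "p \<in> Nset Q \<sigma> \<tau>" "gtgt Q p = gtgt Q q" "gtau \<tau> p = - gtau \<tau> q"
    using ex_Nset_opposite_tgt[OF assms gentle_finite_arrs[OF gentle]] by blast
  then show ?thesis using phi_eqI[OF assms] by simp
qed

lemma Phi_in_Nset: "p \<in> Nset Q \<sigma> \<tau> \<Longrightarrow> Phi Q \<sigma> \<tau> p \<in> Nset Q \<sigma> \<tau>"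
  unfolding Phi_def using psi_spec phi_spec by simp

lemma inj_on_Phi: "inj_on (Phi Q \<sigma> \<tau>) (Nset Q \<sigma> \<tau>)"
proof (rule inj_onI)
  fix p p' assume pp: "p \<in> Nset Q \<sigma> \<tau>" "p' \<in> Nset Q \<sigma> \<tau>" "Phi Q \<sigma> \<tau> p = Phi Q \<sigma> \<tau> p'"
  have m: "psi Q \<sigma> \<tau> p \<in> Mset Q \<sigma> \<tau>" "psi Q \<sigma> \<tau> p' \<in> Mset Q \<sigma> \<tau>" using psi_spec pp by auto
  have "gtgt Q (psi Q \<sigma> \<tau> p) = gtgt Q (psi Q \<sigma> \<tau> p')" "gtau \<tau> (psi Q \<sigma> \<tau> p) = gtau \<tau> (psi Q \<sigma> \<tau> p')"
    using phi_spec[OF m(1)] phi_spec[OF m(2)] pp(3) unfolding Phi_def by (metis o_apply neg_equal_iff_equal)+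
  then have "psi Q \<sigma> \<tau> p = psi Q \<sigma> \<tau> p'" using Mset_unique_tgt[OF m] by simp
  then show "p = p'" using Nset_unique_src[OF pp(1,2)] psi_spec[OF pp(1)] psi_spec[OF pp(2)] by simp
qed

lemma finite_perm_Phi: "finite_perm (Nset Q \<sigma> \<tau>) (Phi Q \<sigma> \<tau>)"
  by unfold_locales (use finite_Nset[OF gentle_finite_verts[OF gentle]] Phi_in_Nset inj_on_Phi in auto)

lemma Psi_spec:
  assumes "a \<in> Cset Q \<sigma> \<tau>"
  shows "Psi Q \<sigma> \<tau> a \<in> Cset Q \<sigma> \<tau> \<and> tgt Q (Psi Q \<sigma> \<tau> a) = src Q a \<and> \<tau> (Psi Q \<sigma> \<tau> a) = \<sigma> a"
proof -
  obtain b where "b \<in> Cset Q \<sigma> \<tau>" "tgt Q b = src Q a" "\<tau> b = \<sigma> a"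
    using ex_Cset_Psi_value[OF assms gentle_finite_arrs[OF gentle]] by blast
  then show ?thesis using Psi_eqI by simp
qed

end

section \<open>Completing an isolated relation\<close>

locale isolated_completion = gentle_signed_quiver +
  fixes \<alpha> \<beta> \<gamma> :: 'a
  assumes isolated: "isolated Q \<sigma> \<tau> \<alpha> \<beta>" and fresh: "\<gamma> \<notin> arrs Q"
begin

abbreviation "Q' \<equiv> complete Q \<alpha> \<beta> \<gamma>"
abbreviation "\<rho> \<equiv> Path [\<alpha>, \<beta>]"

definition \<sigma>' :: "'a \<Rightarrow> int" where "\<sigma>' = \<sigma>(\<gamma> := \<tau> \<alpha>)"
definition \<tau>' :: "'a \<Rightarrow> int" where "\<tau>' = \<tau>(\<gamma> := \<sigma> \<beta>)"

text \<open>Deliberately not simp rules: the simplifier would otherwise unfold the unapplied \<open>\<sigma>'\<close>, \<open>\<tau>'\<close>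
  inside terms such as \<open>Psi Q' \<sigma>' \<tau>'\<close> into \<open>\<lambda>\<close>-terms that no longer match the lemmas about them.\<close>

lemma completion_signs:
  "\<sigma>' a = (if a = \<gamma> then \<tau> \<alpha> else \<sigma> a)" "\<tau>' a = (if a = \<gamma> then \<sigma> \<beta> else \<tau> a)"
  unfolding \<sigma>'_def \<tau>'_def by simp_all

lemma complete_simps [simp]:
  "verts Q' = verts Q" "arrs Q' = insert \<gamma> (arrs Q)"
  "src Q' = (src Q)(\<gamma> := tgt Q \<alpha>)" "tgt Q' = (tgt Q)(\<gamma> := src Q \<beta>)"
  "rels Q' = rels Q \<union> {(\<gamma>, \<alpha>), (\<beta>, \<gamma>)}"
  unfolding complete_def by simp_all

lemma rho_in_Nset: "\<rho> \<in> Nset Q \<sigma> \<tau>"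
  and alpha_beta_rels: "(\<alpha>, \<beta>) \<in> rels Q"
  using isolated unfolding isolated_def by blast+

lemma alpha_beta: "\<alpha> \<in> arrs Q" "\<beta> \<in> arrs Q" "src Q \<alpha> = tgt Q \<beta>" "\<sigma> \<alpha> = \<tau> \<beta>"
  using alpha_beta_rels rels_iff by auto

lemma no_arrow_after_alpha: "\<not> (\<exists>a\<in>arrs Q. src Q a = tgt Q \<alpha> \<and> \<sigma> a = \<tau> \<alpha>)"
  and no_arrow_before_beta: "\<not> (\<exists>b\<in>arrs Q. tgt Q b = src Q \<beta> \<and> \<tau> b = \<sigma> \<beta>)"
  using rho_in_Nset by (simp_all add: mem_Nset_iff)

lemma alpha_beta_gamma_distinct: "\<alpha> \<noteq> \<beta>" "\<alpha> \<noteq> \<gamma>" "\<beta> \<noteq> \<gamma>"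
  using no_arrow_after_alpha alpha_beta fresh by auto

lemma alpha_beta_signs: "\<sigma> \<alpha> \<in> {1, -1}" "\<tau> \<alpha> \<in> {1, -1}" "\<sigma> \<beta> \<in> {1, -1}" "\<tau> \<beta> \<in> {1, -1}"
  using alpha_beta sigma_sign tau_sign by auto

lemma sigma_after_alpha: "a \<in> arrs Q \<Longrightarrow> src Q a = tgt Q \<alpha> \<Longrightarrow> \<sigma> a = - \<tau> \<alpha>"
  using no_arrow_after_alpha sigma_sign[of a] alpha_beta_signs by auto

lemma tau_before_beta: "b \<in> arrs Q \<Longrightarrow> tgt Q b = src Q \<beta> \<Longrightarrow> \<tau> b = - \<sigma> \<beta>"
  using no_arrow_before_beta tau_sign[of b] alpha_beta_signs by auto

lemma gamma_notin_rels: "(\<gamma>, y) \<notin> rels Q" "(y, \<gamma>) \<notin> rels Q"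
  using rels_iff fresh by auto

lemma rels_completion_iff:
  assumes ab: "a \<in> arrs Q'" "b \<in> arrs Q'" "src Q' a = tgt Q' b"
  shows "(a, b) \<in> rels Q' \<longleftrightarrow> \<sigma>' a = \<tau>' b"
proof (cases "a = \<gamma>"; cases "b = \<gamma>")
  assume "a = \<gamma>" "b = \<gamma>"
  then have "src Q \<beta> = tgt Q \<alpha>" using ab by simp
  then have "\<sigma> \<beta> \<noteq> \<tau> \<alpha>" using no_arrow_after_alpha alpha_beta by auto
  then show ?thesis using \<open>a = \<gamma>\<close> \<open>b = \<gamma>\<close> alpha_beta_gamma_distinct gamma_notin_rels
    by (auto simp: completion_signs)
next
  assume "a = \<gamma>" "b \<noteq> \<gamma>"
  then have b: "b \<in> arrs Q" "tgt Q b = tgt Q \<alpha>" using ab by auto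
  have "\<tau> b = \<tau> \<alpha> \<longleftrightarrow> b = \<alpha>" using arrow_eq_if_tgt_tau_eq[OF b(1) alpha_beta(1) b(2)] by auto
  then show ?thesis using \<open>a = \<gamma>\<close> \<open>b \<noteq> \<gamma>\<close> alpha_beta_gamma_distinct gamma_notin_rels
    by (auto simp: completion_signs)
next
  assume "a \<noteq> \<gamma>" "b = \<gamma>"
  then have a: "a \<in> arrs Q" "src Q a = src Q \<beta>" using ab by auto
  have "\<sigma> a = \<sigma> \<beta> \<longleftrightarrow> a = \<beta>" using arrow_eq_if_src_sigma_eq[OF a(1) alpha_beta(2) a(2)] by auto
  then show ?thesis using \<open>a \<noteq> \<gamma>\<close> \<open>b = \<gamma>\<close> alpha_beta_gamma_distinct gamma_notin_rels
    by (auto simp: completion_signs)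
next
  assume "a \<noteq> \<gamma>" "b \<noteq> \<gamma>"
  then have "a \<in> arrs Q" "b \<in> arrs Q" "src Q a = tgt Q b" using ab by auto
  then show ?thesis using \<open>a \<noteq> \<gamma>\<close> \<open>b \<noteq> \<gamma>\<close> rels_iff by (auto simp: completion_signs)
qed

lemma sign_fns_completion: "sign_fns Q' \<sigma>' \<tau>'"
proof -
  have "\<forall>a\<in>arrs Q'. \<sigma>' a \<in> {1, -1} \<and> \<tau>' a \<in> {1, -1}"
    using alpha_beta_signs sigma_sign tau_sign by (auto simp: completion_signs)
  moreover have "\<sigma>' a = - \<sigma>' b" if ab: "a \<in> arrs Q'" "b \<in> arrs Q'" "a \<noteq> b" "src Q' a = src Q' b" for a b
  proof -
    consider "a = \<gamma>" "b \<in> arrs Q" | "b = \<gamma>" "a \<in> arrs Q" | "a \<in> arrs Q" "b \<in> arrs Q" "a \<noteq> \<gamma>" "b \<noteq> \<gamma>"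
      using ab by auto
    then show ?thesis
    proof cases
      case 3
      moreover have "src Q a = src Q b" using ab(4) 3 by simp
      ultimately have "\<sigma> a = - \<sigma> b" using sign_fns ab(3) unfolding sign_fns_def by blast
      then show ?thesis using 3 by (simp add: completion_signs)
    qed (use ab fresh sigma_after_alpha in \<open>simp_all add: completion_signs\<close>)
  qed
  moreover have "\<tau>' a = - \<tau>' b" if ab: "a \<in> arrs Q'" "b \<in> arrs Q'" "a \<noteq> b" "tgt Q' a = tgt Q' b" for a b
  proof -
    consider "a = \<gamma>" "b \<in> arrs Q" | "b = \<gamma>" "a \<in> arrs Q" | "a \<in> arrs Q" "b \<in> arrs Q" "a \<noteq> \<gamma>" "b \<noteq> \<gamma>"
      using ab by auto
    then show ?thesis
    proof cases
      case 3
      moreover have "tgt Q a = tgt Q b" using ab(4) 3 by simp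
      ultimately have "\<tau> a = - \<tau> b" using sign_fns ab(3) unfolding sign_fns_def by blast
      then show ?thesis using 3 by (simp add: completion_signs)
    qed (use ab fresh tau_before_beta in \<open>simp_all add: completion_signs\<close>)
  qed
  ultimately show ?thesis unfolding sign_fns_def using rels_completion_iff by blast
qed

end

sublocale isolated_completion \<subseteq> Q': signed_quiver Q' \<sigma>' \<tau>'
proof
  show "sign_fns Q' \<sigma>' \<tau>'" by (rule sign_fns_completion)
  show "(a, b) \<in> rels Q' \<Longrightarrow> a \<in> arrs Q' \<and> b \<in> arrs Q' \<and> src Q' a = tgt Q' b" for a b
    using rels_iff[of a b] alpha_beta alpha_beta_gamma_distinct fresh by auto
  show "a \<in> arrs Q' \<Longrightarrow> src Q' a \<in> verts Q' \<and> tgt Q' a \<in> verts Q'" for a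
    using arrow_ends alpha_beta by auto
qed

context isolated_completion
begin

lemma rels_completion_closed: "(u, v) \<in> rels Q' \<Longrightarrow> u \<in> {\<alpha>, \<beta>, \<gamma>} \<Longrightarrow> v \<in> {\<alpha>, \<beta>, \<gamma>}"
proof -
  assume uv: "(u, v) \<in> rels Q'" "u \<in> {\<alpha>, \<beta>, \<gamma>}"
  show "v \<in> {\<alpha>, \<beta>, \<gamma>}"
  proof (cases "(u, v) \<in> rels Q")
    case True
    then have "u \<noteq> \<gamma>" "u \<noteq> \<beta>" using gamma_notin_rels no_arrow_before_beta rels_iff by auto
    then have "u = \<alpha>" using uv by auto
    then show ?thesis using rels_right_unique True alpha_beta_rels by blast
  next
    case False
    then show ?thesis using uv by auto
  qed
qed

text \<open>The relations \<open>(\<gamma>, \<alpha>), (\<alpha>, \<beta>), (\<beta>, \<gamma>)\<close> form a cycle, so no maximal antipath of the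
  completion can pass through \<open>\<alpha>\<close>, \<open>\<beta>\<close> or \<open>\<gamma>\<close>.\<close>

lemma gamma_notin_Nset_completion: assumes "Path ws \<in> Nset Q' \<sigma>' \<tau>'" shows "\<gamma> \<notin> set ws"
proof
  assume "\<gamma> \<in> set ws"
  moreover have chain: "successively (\<lambda>a b. (a, b) \<in> rels Q') ws" "\<not> (\<exists>b. (last ws, b) \<in> rels Q')"
    using Q'.Path_in_Nset_iff assms by auto
  ultimately have "last ws \<in> {\<alpha>, \<beta>, \<gamma>}"
    using successively_last_in[OF chain(1), of \<gamma> "{\<alpha>, \<beta>, \<gamma>}"] rels_completion_closed by blast
  then show False using chain(2) alpha_beta_rels by auto
qed

lemma Nset_completion_subset: assumes "p \<in> Nset Q' \<sigma>' \<tau>'" shows "p \<in> Nset Q \<sigma> \<tau> \<and> p \<noteq> \<rho>"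
proof (cases p)
  case (PTriv x e) then show ?thesis using assms by (simp add: Q'.PTriv_notin_Nset)
next
  case (ATriv x e)
  have "\<And>a. a \<in> arrs Q \<Longrightarrow> a \<noteq> \<gamma>" using fresh by auto
  then show ?thesis using assms ATriv by (auto simp: mem_Nset_iff antipath_def completion_signs)
next
  case (Path ws)
  have W: "ws \<noteq> []" "set ws \<subseteq> insert \<gamma> (arrs Q)" "successively (\<lambda>a b. (a, b) \<in> rels Q') ws"
    "\<not> (\<exists>a. (a, hd ws) \<in> rels Q')" "\<not> (\<exists>b. (last ws, b) \<in> rels Q')"
    using Q'.Path_in_Nset_iff assms Path by auto
  have g: "\<gamma> \<notin> set ws" using gamma_notin_Nset_completion assms Path by simp
  have "successively (\<lambda>a b. (a, b) \<in> rels Q) ws"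
    by (rule successively_mono[OF W(3)]) (use g in auto)
  then have "Path ws \<in> Nset Q \<sigma> \<tau>" using W g Path_in_Nset_iff by auto
  moreover have "\<rho> \<notin> Nset Q' \<sigma>' \<tau>'" using Q'.Path_in_Nset_iff[of "[\<alpha>, \<beta>]"] by auto
  ultimately show ?thesis using Path assms by auto
qed

lemma Nset_subset_completion: assumes "p \<in> Nset Q \<sigma> \<tau>" "p \<noteq> \<rho>" shows "p \<in> Nset Q' \<sigma>' \<tau>'"
proof (cases p)
  case (PTriv x e) then show ?thesis using assms by (simp add: PTriv_notin_Nset)
next
  case (ATriv x e)
  then have x: "x \<in> verts Q" "e \<in> {1, -1}" "\<not> (\<exists>a\<in>arrs Q. src Q a = x \<and> \<sigma> a = e)"
    "\<not> (\<exists>b\<in>arrs Q. tgt Q b = x \<and> \<tau> b = e)" using assms by (auto simp: ATriv_in_Nset_iff)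
  moreover have "\<not> (x = tgt Q \<alpha> \<and> e = \<tau> \<alpha>)" "\<not> (x = src Q \<beta> \<and> e = \<sigma> \<beta>)"
    using x(3,4) alpha_beta by auto
  moreover have "\<And>a. a \<in> arrs Q \<Longrightarrow> a \<noteq> \<gamma>" using fresh by auto
  ultimately show ?thesis using ATriv by (auto simp: mem_Nset_iff antipath_def completion_signs)
next
  case (Path ws)
  have W: "ws \<noteq> []" "set ws \<subseteq> arrs Q" "successively (\<lambda>a b. (a, b) \<in> rels Q) ws"
    "\<not> (\<exists>a. (a, hd ws) \<in> rels Q)" "\<not> (\<exists>b. (last ws, b) \<in> rels Q)"
    using Path_in_Nset_iff assms Path by auto
  have "hd ws \<noteq> \<gamma>" "last ws \<noteq> \<gamma>" using Path_in_Nset_ends assms(1) Path fresh by auto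
  moreover have "hd ws \<noteq> \<alpha>" using Nset_unique_tgt[OF assms(1) rho_in_Nset] Path assms(2) by auto
  moreover have "last ws \<noteq> \<beta>" using Nset_unique_src[OF assms(1) rho_in_Nset] Path assms(2) by auto
  moreover have "successively (\<lambda>a b. (a, b) \<in> rels Q') ws"
    by (rule successively_mono[OF W(3)]) auto
  ultimately show ?thesis using W Path Q'.Path_in_Nset_iff by auto
qed

lemma Nset_completion: "Nset Q' \<sigma>' \<tau>' = Nset Q \<sigma> \<tau> - {\<rho>}"
  using Nset_completion_subset Nset_subset_completion by blast

lemma Path_in_Nset_through_alpha_beta:
  assumes "Path ws \<in> Nset Q \<sigma> \<tau>" "\<alpha> \<in> set ws \<or> \<beta> \<in> set ws" shows "Path ws = \<rho>"
proof -
  have chain: "successively (\<lambda>a b. (a, b) \<in> rels Q) ws" using Path_in_Nset_iff assms by auto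
  show ?thesis using assms(2)
  proof
    assume "\<alpha> \<in> set ws"
    then obtain us vs where ws: "ws = us @ \<alpha> # vs" by (auto simp: in_set_conv_decomp)
    have "us = []"
    proof (rule ccontr)
      assume "us \<noteq> []"
      then have "(last us, \<alpha>) \<in> rels Q" using chain ws by (simp add: successively_append_iff)
      then show False using no_arrow_after_alpha rels_iff by auto
    qed
    then show ?thesis using Nset_unique_tgt[OF assms(1) rho_in_Nset] ws by simp
  next
    assume "\<beta> \<in> set ws"
    then obtain us vs where ws: "ws = us @ \<beta> # vs" by (auto simp: in_set_conv_decomp)
    have "vs = []"
    proof (rule ccontr)
      assume "vs \<noteq> []"
      then have "(\<beta>, hd vs) \<in> rels Q" using chain ws by (simp add: successively_append_iff successively_Cons)
      then show False using no_arrow_before_beta rels_iff by auto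
    qed
    then show ?thesis using Nset_unique_src[OF assms(1) rho_in_Nset] ws by simp
  qed
qed

lemma alpha_beta_gamma_notin_Cset: "\<alpha> \<notin> Cset Q \<sigma> \<tau>" "\<beta> \<notin> Cset Q \<sigma> \<tau>" "\<gamma> \<notin> Cset Q \<sigma> \<tau>"
  using mem_Cset_iff rho_in_Nset fresh by auto

lemma Cset_completion: "Cset Q' \<sigma>' \<tau>' = Cset Q \<sigma> \<tau> \<union> {\<alpha>, \<beta>, \<gamma>}"
proof (intro equalityI subsetI)
  fix a assume "a \<in> Cset Q' \<sigma>' \<tau>'"
  then have a: "a \<in> insert \<gamma> (arrs Q)" "\<And>ws. Path ws \<in> Nset Q \<sigma> \<tau> - {\<rho>} \<Longrightarrow> a \<notin> set ws"
    using Q'.mem_Cset_iff Nset_completion by auto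
  show "a \<in> Cset Q \<sigma> \<tau> \<union> {\<alpha>, \<beta>, \<gamma>}"
  proof (cases "a \<in> {\<alpha>, \<beta>, \<gamma>}")
    case False
    then have "\<And>ws. Path ws \<in> Nset Q \<sigma> \<tau> \<Longrightarrow> a \<notin> set ws" using a(2) by fastforce
    then show ?thesis using a(1) False mem_Cset_iff by auto
  qed blast
next
  fix a assume a: "a \<in> Cset Q \<sigma> \<tau> \<union> {\<alpha>, \<beta>, \<gamma>}"
  have "a \<notin> set ws" if ws: "Path ws \<in> Nset Q \<sigma> \<tau>" "Path ws \<noteq> \<rho>" for ws
  proof (cases "a \<in> Cset Q \<sigma> \<tau>")
    case True then show ?thesis using mem_Cset_iff ws(1) by blast
  next
    case False
    then have "a = \<alpha> \<or> a = \<beta> \<or> a = \<gamma>" using a by blast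
    moreover have "set ws \<subseteq> arrs Q" using ws Path_in_Nset_iff by auto
    ultimately show ?thesis using Path_in_Nset_through_alpha_beta[OF ws(1)] ws(2) fresh by blast
  qed
  moreover have "a \<in> insert \<gamma> (arrs Q)" using a alpha_beta mem_Cset_iff by auto
  ultimately show "a \<in> Cset Q' \<sigma>' \<tau>'" using Q'.mem_Cset_iff Nset_completion by auto
qed

lemma Psi_completion: assumes "a \<in> Cset Q \<sigma> \<tau>" shows "Psi Q' \<sigma>' \<tau>' a = Psi Q \<sigma> \<tau> a"
proof -
  have P: "Psi Q \<sigma> \<tau> a \<in> Cset Q \<sigma> \<tau>" "tgt Q (Psi Q \<sigma> \<tau> a) = src Q a" "\<tau> (Psi Q \<sigma> \<tau> a) = \<sigma> a"
    using Psi_spec[OF assms] by auto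
  have "a \<noteq> \<gamma>" "Psi Q \<sigma> \<tau> a \<noteq> \<gamma>" using P(1) assms alpha_beta_gamma_notin_Cset by auto
  then show ?thesis using P Cset_completion by (intro Q'.Psi_eqI) (auto simp: completion_signs)
qed

lemma Psi_completion_triangle: "Psi Q' \<sigma>' \<tau>' \<alpha> = \<beta>" "Psi Q' \<sigma>' \<tau>' \<beta> = \<gamma>" "Psi Q' \<sigma>' \<tau>' \<gamma> = \<alpha>"
  by (rule Q'.Psi_eqI; use Cset_completion alpha_beta alpha_beta_gamma_distinct in \<open>auto simp: completion_signs\<close>)+

lemma funpow_Psi_completion:
  assumes "a \<in> Cset Q \<sigma> \<tau>"
  shows "(Psi Q' \<sigma>' \<tau>' ^^ n) a = (Psi Q \<sigma> \<tau> ^^ n) a \<and> (Psi Q \<sigma> \<tau> ^^ n) a \<in> Cset Q \<sigma> \<tau>"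
proof (induction n)
  case 0 then show ?case using assms by simp
next
  case (Suc n)
  then show ?case using Psi_completion Psi_spec by simp
qed

lemma funpow_Psi_completion_triangle:
  assumes "a \<in> {\<alpha>, \<beta>, \<gamma>}" shows "(Psi Q' \<sigma>' \<tau>' ^^ n) a \<in> {\<alpha>, \<beta>, \<gamma>}"
proof (induction n)
  case 0 then show ?case using assms by simp
next
  case (Suc n)
  then show ?case using Psi_completion_triangle by auto
qed

lemma orbit_completion_Cset:
  assumes "x \<in> Cset Q \<sigma> \<tau>"
  shows "orbit_on (Cset Q' \<sigma>' \<tau>') (Psi Q' \<sigma>' \<tau>') x = orbit_on (Cset Q \<sigma> \<tau>) (Psi Q \<sigma> \<tau>) x"
proof -
  have "y \<in> orbit_on (Cset Q' \<sigma>' \<tau>') (Psi Q' \<sigma>' \<tau>') x \<longleftrightarrow> y \<in> orbit_on (Cset Q \<sigma> \<tau>) (Psi Q \<sigma> \<tau>) x" for y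
  proof (cases "y \<in> Cset Q \<sigma> \<tau>")
    case True
    then show ?thesis
      unfolding orbit_on_def using funpow_Psi_completion[OF assms] funpow_Psi_completion[OF True] Cset_completion
      by auto
  next
    case False
    have "y \<notin> orbit_on (Cset Q' \<sigma>' \<tau>') (Psi Q' \<sigma>' \<tau>') x"
    proof
      assume y: "y \<in> orbit_on (Cset Q' \<sigma>' \<tau>') (Psi Q' \<sigma>' \<tau>') x"
      then have y3: "y \<in> {\<alpha>, \<beta>, \<gamma>}" using False Cset_completion unfolding orbit_on_def by auto
      from y obtain n where "(Psi Q' \<sigma>' \<tau>' ^^ n) x = y \<or> (Psi Q' \<sigma>' \<tau>' ^^ n) y = x"
        unfolding orbit_on_def by auto
      then show False
        using funpow_Psi_completion[OF assms, of n] funpow_Psi_completion_triangle[OF y3, of n] y3 False assms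
          alpha_beta_gamma_notin_Cset by auto
    qed
    then show ?thesis using False unfolding orbit_on_def by auto
  qed
  then show ?thesis by blast
qed

lemma orbit_completion_triangle:
  assumes "x \<in> {\<alpha>, \<beta>, \<gamma>}" shows "orbit_on (Cset Q' \<sigma>' \<tau>') (Psi Q' \<sigma>' \<tau>') x = {\<alpha>, \<beta>, \<gamma>}"
proof -
  let ?f = "Psi Q' \<sigma>' \<tau>'"
  have three: "{x, ?f x, ?f (?f x)} = {\<alpha>, \<beta>, \<gamma>}" using assms Psi_completion_triangle by auto
  have reach3: "\<exists>n. (?f ^^ n) x = y" if "y \<in> {\<alpha>, \<beta>, \<gamma>}" for y
  proof -
    have "y = x \<or> y = ?f x \<or> y = ?f (?f x)" using that three by blast
    moreover have "(?f ^^ 0) x = x" "(?f ^^ Suc 0) x = ?f x" "(?f ^^ Suc (Suc 0)) x = ?f (?f x)" by simp_all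
    ultimately show ?thesis by metis
  qed
  have "y \<in> orbit_on (Cset Q' \<sigma>' \<tau>') ?f x \<longleftrightarrow> y \<in> {\<alpha>, \<beta>, \<gamma>}" for y
  proof (cases "y \<in> {\<alpha>, \<beta>, \<gamma>}")
    case True
    then show ?thesis unfolding orbit_on_def using reach3 Cset_completion by auto
  next
    case False
    have "y \<notin> orbit_on (Cset Q' \<sigma>' \<tau>') ?f x"
    proof
      assume y: "y \<in> orbit_on (Cset Q' \<sigma>' \<tau>') ?f x"
      then have yC: "y \<in> Cset Q \<sigma> \<tau>" using False Cset_completion unfolding orbit_on_def by auto
      from y obtain n where "(?f ^^ n) x = y \<or> (?f ^^ n) y = x" unfolding orbit_on_def by auto
      then show False
        using funpow_Psi_completion[OF yC, of n] funpow_Psi_completion_triangle[OF assms, of n] yC False assms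
          alpha_beta_gamma_notin_Cset by auto
    qed
    then show ?thesis using False by auto
  qed
  then show ?thesis by blast
qed

lemma Corbits_completion: "Corbits Q' \<sigma>' \<tau>' = Corbits Q \<sigma> \<tau> \<union> {{\<alpha>, \<beta>, \<gamma>}}"
proof -
  have "Corbits Q' \<sigma>' \<tau>' = (\<lambda>x. orbit_on (Cset Q' \<sigma>' \<tau>') (Psi Q' \<sigma>' \<tau>') x) ` Cset Q \<sigma> \<tau> \<union>
      (\<lambda>x. orbit_on (Cset Q' \<sigma>' \<tau>') (Psi Q' \<sigma>' \<tau>') x) ` {\<alpha>, \<beta>, \<gamma>}"
    unfolding Corbits_def Cset_completion by (rule image_Un)
  also have "(\<lambda>x. orbit_on (Cset Q' \<sigma>' \<tau>') (Psi Q' \<sigma>' \<tau>') x) ` Cset Q \<sigma> \<tau> = Corbits Q \<sigma> \<tau>"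
    unfolding Corbits_def using orbit_completion_Cset by (intro image_cong) auto
  also have "(\<lambda>x. orbit_on (Cset Q' \<sigma>' \<tau>') (Psi Q' \<sigma>' \<tau>') x) ` {\<alpha>, \<beta>, \<gamma>} = {{\<alpha>, \<beta>, \<gamma>}}"
    using orbit_completion_triangle by auto
  finally show ?thesis .
qed

end

context isolated_completion
begin

text \<open>\<open>gamma_fits_tgt p\<close> and \<open>gamma_fits_src p\<close> say that \<open>\<gamma>\<close> can be attached by a permitted
  step at the target, resp. source, end of \<open>p\<close>.\<close>

definition gamma_fits_tgt where
  "gamma_fits_tgt p \<longleftrightarrow> gtgt Q p = tgt Q \<alpha> \<and> gtau \<tau> p = - \<tau> \<alpha>"

definition gamma_fits_src where
  "gamma_fits_src p \<longleftrightarrow> gsrc Q p = src Q \<beta> \<and> gsig \<sigma> p = - \<sigma> \<beta>"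

lemma permitted_step_completion_iff:
  "a \<noteq> \<gamma> \<Longrightarrow> b \<noteq> \<gamma> \<Longrightarrow> permitted_step Q' a b \<longleftrightarrow> permitted_step Q a b"
  unfolding permitted_step_def by auto

lemma successively_permitted_step_completion_iff:
  "\<gamma> \<notin> set ws \<Longrightarrow> successively (permitted_step Q') ws \<longleftrightarrow> successively (permitted_step Q) ws"
  by (rule successively_cong) (metis permitted_step_completion_iff)+

lemma permitted_step_gamma_left_iff:
  assumes "b \<in> arrs Q" shows "permitted_step Q' \<gamma> b \<longleftrightarrow> tgt Q b = tgt Q \<alpha> \<and> \<tau> b = - \<tau> \<alpha>"
proof -
  have "permitted_step Q' \<gamma> b \<longleftrightarrow> tgt Q b = tgt Q \<alpha> \<and> b \<noteq> \<alpha>"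
    unfolding permitted_step_def using assms fresh gamma_notin_rels alpha_beta_gamma_distinct by auto
  also have "\<dots> \<longleftrightarrow> tgt Q b = tgt Q \<alpha> \<and> \<tau> b = - \<tau> \<alpha>"
    using arrow_eq_if_tgt_tau_eq[OF assms alpha_beta(1)] tau_sign[OF assms] alpha_beta_signs by auto
  finally show ?thesis .
qed

lemma permitted_step_gamma_right_iff:
  assumes "a \<in> arrs Q" shows "permitted_step Q' a \<gamma> \<longleftrightarrow> src Q a = src Q \<beta> \<and> \<sigma> a = - \<sigma> \<beta>"
proof -
  have "permitted_step Q' a \<gamma> \<longleftrightarrow> src Q a = src Q \<beta> \<and> a \<noteq> \<beta>"
    unfolding permitted_step_def using assms fresh gamma_notin_rels alpha_beta_gamma_distinct by auto
  also have "\<dots> \<longleftrightarrow> src Q a = src Q \<beta> \<and> \<sigma> a = - \<sigma> \<beta>"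
    using arrow_eq_if_src_sigma_eq[OF assms alpha_beta(2)] sigma_sign[OF assms] alpha_beta_signs by auto
  finally show ?thesis .
qed

lemma permitted_step_gamma_gamma_iff:
  "permitted_step Q' \<gamma> \<gamma> \<longleftrightarrow> tgt Q \<alpha> = src Q \<beta> \<and> \<sigma> \<beta> = - \<tau> \<alpha>"
proof -
  have "permitted_step Q' \<gamma> \<gamma> \<longleftrightarrow> tgt Q \<alpha> = src Q \<beta>"
    unfolding permitted_step_def using gamma_notin_rels alpha_beta_gamma_distinct by auto
  moreover have "\<sigma> \<beta> = - \<tau> \<alpha>" if "tgt Q \<alpha> = src Q \<beta>"
    using that no_arrow_after_alpha alpha_beta alpha_beta_signs by auto
  ultimately show ?thesis by blast
qed

lemma permitted_step_gamma_hd_iff: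
  assumes "m \<in> Mset Q \<sigma> \<tau>" "arrows m \<noteq> []"
  shows "permitted_step Q' \<gamma> (hd (arrows m)) \<longleftrightarrow> gamma_fits_tgt m"
  using assms Mset_arrows_ne[OF assms] Mset_arrows(1)[OF assms(1)]
    permitted_step_gamma_left_iff[of "hd (arrows m)"]
  by (metis gamma_fits_tgt_def gtau.simps(3) gtgt.simps(3) hd_in_set subsetD)

lemma permitted_step_last_gamma_iff:
  assumes "m \<in> Mset Q \<sigma> \<tau>" "arrows m \<noteq> []"
  shows "permitted_step Q' (last (arrows m)) \<gamma> \<longleftrightarrow> gamma_fits_src m"
  using assms Mset_arrows_ne[OF assms] Mset_arrows(1)[OF assms(1)]
    permitted_step_gamma_right_iff[of "last (arrows m)"]
  by (metis gamma_fits_src_def gsig.simps(3) gsrc.simps(3) last_in_set subsetD)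

lemma phi_eq_rho_iff: assumes "m \<in> Mset Q \<sigma> \<tau>" shows "phi Q \<sigma> \<tau> m = \<rho> \<longleftrightarrow> gamma_fits_tgt m"
proof
  assume "phi Q \<sigma> \<tau> m = \<rho>"
  then show "gamma_fits_tgt m" using phi_spec[OF assms] unfolding gamma_fits_tgt_def by auto
next
  assume "gamma_fits_tgt m"
  then show "phi Q \<sigma> \<tau> m = \<rho>"
    using rho_in_Nset unfolding gamma_fits_tgt_def by (intro phi_eqI[OF assms]) auto
qed

lemma gamma_fits_src_psi_iff:
  assumes "q \<in> Nset Q \<sigma> \<tau>" shows "gamma_fits_src (psi Q \<sigma> \<tau> q) \<longleftrightarrow> q = \<rho>"
  using psi_spec[OF assms] psi_spec[OF rho_in_Nset] Nset_unique_src[OF assms rho_in_Nset]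
  unfolding gamma_fits_src_def by auto

lemma Phi_rho_eq_rho_iff: "Phi Q \<sigma> \<tau> \<rho> = \<rho> \<longleftrightarrow> gamma_fits_tgt (psi Q \<sigma> \<tau> \<rho>)"
  unfolding Phi_def using phi_eq_rho_iff psi_spec[OF rho_in_Nset] by simp

text \<open>If \<open>\<Phi> \<rho> = \<rho>\<close>, then \<open>\<gamma>\<close> followed by the arrows of \<open>\<psi> \<rho>\<close> is a cycle of permitted
  steps.\<close>

lemma not_gentle_completion: assumes "Phi Q \<sigma> \<tau> \<rho> = \<rho>" shows "\<not> gentle Q'"
proof -
  define m where "m = psi Q \<sigma> \<tau> \<rho>"
  have m: "m \<in> Mset Q \<sigma> \<tau>" "gamma_fits_src m" "gamma_fits_tgt m"
    using psi_spec[OF rho_in_Nset] gamma_fits_src_psi_iff[OF rho_in_Nset] assms Phi_rho_eq_rho_iff m_def by auto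
  define cyc where "cyc = \<gamma> # arrows m"
  have "successively (permitted_step Q') cyc \<and> permitted_step Q' (last cyc) (hd cyc)"
  proof (cases "arrows m = []")
    case True
    then show ?thesis
      using Mset_arrows_Nil[OF m(1)] m(2,3) permitted_step_gamma_gamma_iff cyc_def
      unfolding gamma_fits_src_def gamma_fits_tgt_def by auto
  next
    case False
    have "\<gamma> \<notin> set (arrows m)" using Mset_arrows(1)[OF m(1)] fresh by auto
    then have "successively (permitted_step Q') (arrows m)"
      using Mset_arrows(2)[OF m(1)] successively_permitted_step_completion_iff by simp
    then show ?thesis
      using False permitted_step_gamma_hd_iff[OF m(1) False] permitted_step_last_gamma_iff[OF m(1) False] m(2,3)
      by (cases "arrows m") (simp_all add: cyc_def)
  qed
  then show ?thesis using not_gentle_if_permitted_cycle[of Q' cyc] cyc_def by simp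
qed

text \<open>Conversely, two occurrences of \<open>\<gamma>\<close> on a path without relations enclose a permitted path
  of \<open>Q\<close> to which \<open>\<gamma>\<close> can be attached at both ends; it must be \<open>\<psi> \<rho>\<close>, so \<open>\<Phi> \<rho> = \<rho>\<close>.\<close>

lemma Phi_rho_eq_rho_if_gamma_segment:
  assumes seg: "successively (permitted_step Q') (\<gamma> # xs @ [\<gamma>])" and g: "\<gamma> \<notin> set xs"
  shows "Phi Q \<sigma> \<tau> \<rho> = \<rho>"
proof -
  define m where "m = (if xs = [] then PTriv (src Q \<beta>) (- \<sigma> \<beta>) else Path xs)"
  have "m \<in> Mset Q \<sigma> \<tau> \<and> gamma_fits_src m \<and> gamma_fits_tgt m"
  proof (cases "xs = []")
    case True
    then have "permitted_step Q' \<gamma> \<gamma>" using seg by simp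
    then have eqs: "tgt Q \<alpha> = src Q \<beta>" "\<sigma> \<beta> = - \<tau> \<alpha>" using permitted_step_gamma_gamma_iff by auto
    then have "\<not> (\<exists>a\<in>arrs Q. src Q a = src Q \<beta> \<and> \<sigma> a = - \<sigma> \<beta>)" using no_arrow_after_alpha by auto
    moreover have "src Q \<beta> \<in> verts Q" using arrow_ends alpha_beta by auto
    ultimately have "PTriv (src Q \<beta>) (- \<sigma> \<beta>) \<in> Mset Q \<sigma> \<tau>"
      using alpha_beta_signs no_arrow_before_beta unfolding PTriv_in_Mset_iff by auto
    then have "m \<in> Mset Q \<sigma> \<tau>" using True m_def by simp
    then show ?thesis using True m_def eqs unfolding gamma_fits_src_def gamma_fits_tgt_def by auto
  next
    case False
    have steps: "successively (permitted_step Q') xs" "permitted_step Q' \<gamma> (hd xs)" "permitted_step Q' (last xs) \<gamma>"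
      using seg False by (auto simp: successively_append_iff successively_Cons)
    have xs: "set xs \<subseteq> arrs Q"
      using successively_set_subset[OF steps(1) False, of "arrs Q'"] steps(2) g
      unfolding permitted_step_def by auto
    then have ends: "hd xs \<in> arrs Q" "last xs \<in> arrs Q" using False by auto
    have "successively (permitted_step Q) xs"
      using steps(1) g successively_permitted_step_completion_iff by simp
    moreover have fits: "tgt Q (hd xs) = tgt Q \<alpha> \<and> \<tau> (hd xs) = - \<tau> \<alpha>" "src Q (last xs) = src Q \<beta> \<and> \<sigma> (last xs) = - \<sigma> \<beta>"
      using steps(2,3) permitted_step_gamma_left_iff[OF ends(1)] permitted_step_gamma_right_iff[OF ends(2)] by auto
    moreover have "\<not> (\<exists>a. permitted_step Q a (hd xs))" "\<not> (\<exists>b. permitted_step Q (last xs) b)"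
      using fits no_arrow_after_alpha no_arrow_before_beta unfolding permitted_step_iff by auto
    ultimately show ?thesis
      using False xs m_def Path_in_Mset_iff unfolding gamma_fits_src_def gamma_fits_tgt_def by auto
  qed
  moreover have "psi Q \<sigma> \<tau> \<rho> = m"
    using calculation rho_in_Nset unfolding gamma_fits_src_def by (intro psi_eqI) auto
  ultimately show ?thesis using Phi_rho_eq_rho_iff by simp
qed

lemma bounded_paths_completion:
  assumes "Phi Q \<sigma> \<tau> \<rho> \<noteq> \<rho>"
  shows "\<exists>n\<ge>1. \<forall>ws. is_path Q' ws \<and> length ws = n \<longrightarrow> (\<exists>i. Suc i < n \<and> (ws ! i, ws ! Suc i) \<in> rels Q')"
proof -
  obtain n0 where n0: "\<And>ws. set ws \<subseteq> arrs Q \<Longrightarrow> successively (permitted_step Q) ws \<Longrightarrow> length ws < n0"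
    using gentle_permitted_paths_bounded[OF gentle] by blast
  have short: "length seg < n0"
    if "successively (permitted_step Q') seg" "\<gamma> \<notin> set seg" "set seg \<subseteq> arrs Q'" for seg
  proof -
    have "successively (permitted_step Q) seg"
      using that(1,2) successively_permitted_step_completion_iff by simp
    then show ?thesis using n0 that(2,3) by auto
  qed
  define N where "N = 2 * n0 + 1"
  have "\<exists>i. Suc i < N \<and> (ws ! i, ws ! Suc i) \<in> rels Q'" if ws: "is_path Q' ws" "length ws = N" for ws
  proof (rule ccontr)
    assume no_rel: "\<not> ?thesis"
    have wa: "set ws \<subseteq> arrs Q'" using ws(1) unfolding is_path_def by blast
    have "permitted Q' (Path ws)" using ws no_rel unfolding permitted_def by auto
    then have steps: "successively (permitted_step Q') ws" using permitted_Path_iff_steps by blast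
    show False
    proof (cases "\<gamma> \<in> set ws")
      case False
      then show False using short[OF steps False wa] ws(2) N_def by simp
    next
      case True
      then obtain us vs where ws_eq: "ws = us @ \<gamma> # vs" "\<gamma> \<notin> set us" by (auto dest: split_list_first)
      show False
      proof (cases "\<gamma> \<in> set vs")
        case False
        have "successively (permitted_step Q') us" "successively (permitted_step Q') vs"
          using steps ws_eq(1) by (auto simp: successively_append_iff successively_Cons)
        then have "length us < n0" "length vs < n0"
          using short ws_eq(2) False wa ws_eq(1) by auto
        then show False using ws(2) ws_eq(1) N_def by simp
      next
        case True
        then obtain xs ys where vs_eq: "vs = xs @ \<gamma> # ys" "\<gamma> \<notin> set xs" by (auto dest: split_list_first)
        have "ws = us @ (\<gamma> # xs @ [\<gamma>]) @ ys" using ws_eq(1) vs_eq(1) by simp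
        then have "successively (permitted_step Q') (us @ (\<gamma> # xs @ [\<gamma>]) @ ys)"
          using steps by (simp only:)
        then have "successively (permitted_step Q') (\<gamma> # xs @ [\<gamma>])"
          unfolding successively_append_iff by blast
        then show False using Phi_rho_eq_rho_if_gamma_segment vs_eq(2) assms by blast
      qed
    qed
  qed
  then show ?thesis using N_def by (intro exI[of _ N]) auto
qed

lemma connected_completion: "connected_quiv Q'"
proof -
  let ?E = "{(src Q a, tgt Q a) | a. a \<in> arrs Q} \<union> {(tgt Q a, src Q a) | a. a \<in> arrs Q}"
  let ?E' = "{(src Q' a, tgt Q' a) | a. a \<in> arrs Q'} \<union> {(tgt Q' a, src Q' a) | a. a \<in> arrs Q'}"
  have "?E \<subseteq> ?E'"
  proof
    fix e assume "e \<in> ?E"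
    then obtain a where a: "a \<in> arrs Q" "e = (src Q a, tgt Q a) \<or> e = (tgt Q a, src Q a)" by blast
    then have "a \<in> arrs Q'" "src Q' a = src Q a" "tgt Q' a = tgt Q a" using fresh by auto
    then have "(src Q a, tgt Q a) \<in> ?E'" "(tgt Q a, src Q a) \<in> ?E'" by (metis (mono_tags, lifting) UnCI mem_Collect_eq)+
    then show "e \<in> ?E'" using a(2) by blast
  qed
  then have sub: "?E\<^sup>* \<subseteq> ?E'\<^sup>*" by (rule rtrancl_mono)
  show ?thesis unfolding connected_quiv_def
  proof (intro ballI)
    fix x y assume "x \<in> verts Q'" "y \<in> verts Q'"
    then have "(x, y) \<in> ?E\<^sup>*" using gentle_connected[OF gentle] unfolding connected_quiv_def by simp
    then show "(x, y) \<in> ?E'\<^sup>*" using sub by blast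
  qed
qed

lemma gentle_completion_iff: "gentle Q' \<longleftrightarrow> Phi Q \<sigma> \<tau> \<rho> \<noteq> \<rho>"
  using not_gentle_completion Q'.gentleI[OF _ _ connected_completion bounded_paths_completion]
    gentle_finite_verts[OF gentle] gentle_finite_arrs[OF gentle]
  by auto

end

context isolated_completion
begin

lemma ports_completion:
  assumes "p \<in> Nset Q \<sigma> \<tau> \<or> p \<in> Mset Q \<sigma> \<tau>"
  shows "gtgt Q' p = gtgt Q p" "gsrc Q' p = gsrc Q p" "gsig \<sigma>' p = gsig \<sigma> p" "gtau \<tau>' p = gtau \<tau> p"
proof -
  have "gtgt Q' p = gtgt Q p \<and> gsrc Q' p = gsrc Q p \<and> gsig \<sigma>' p = gsig \<sigma> p \<and> gtau \<tau>' p = gtau \<tau> p"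
  proof (cases p)
    case (Path ws)
    then have "hd ws \<in> arrs Q" "last ws \<in> arrs Q"
      using assms Path_in_Nset_ends Path_in_Mset_ends by blast+
    then have "hd ws \<noteq> \<gamma>" "last ws \<noteq> \<gamma>" using fresh by auto
    then show ?thesis using Path by (simp add: completion_signs)
  qed simp_all
  then show "gtgt Q' p = gtgt Q p" "gsrc Q' p = gsrc Q p" "gsig \<sigma>' p = gsig \<sigma> p" "gtau \<tau>' p = gtau \<tau> p"
    by auto
qed

lemma Mset_completion:
  assumes m: "m \<in> Mset Q \<sigma> \<tau>" and "\<not> gamma_fits_tgt m" "\<not> gamma_fits_src m"
  shows "m \<in> Mset Q' \<sigma>' \<tau>'"
proof -
  have "permitted Q' m"
  proof (cases m)
    case (Path ws)
    then have "set ws \<subseteq> arrs Q" "ws \<noteq> []" "successively (permitted_step Q) ws"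
      using m Path_in_Mset_iff by auto
    moreover from this have "\<gamma> \<notin> set ws" using fresh by auto
    ultimately show ?thesis
      using Path permitted_Path_iff_steps[of Q' ws] successively_permitted_step_completion_iff[of ws] by auto
  qed (use m in \<open>auto simp: mem_Mset_iff permitted_def\<close>)
  moreover have "\<not> (\<exists>a\<in>arrs Q'. src Q' a = gtgt Q' m \<and> \<sigma>' a = - gtau \<tau>' m)"
    using assms ports_completion[of m] unfolding gamma_fits_tgt_def mem_Mset_iff
    by (auto simp: completion_signs)
  moreover have "\<not> (\<exists>b\<in>arrs Q'. tgt Q' b = gsrc Q' m \<and> \<tau>' b = - gsig \<sigma>' m)"
    using assms ports_completion[of m] unfolding gamma_fits_src_def mem_Mset_iff
    by (auto simp: completion_signs)
  ultimately show ?thesis unfolding mem_Mset_iff by blast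
qed

lemma Phi_completion_eq_Phi:
  assumes q: "q \<in> Nset Q \<sigma> \<tau>" "q \<noteq> \<rho>" and "Phi Q \<sigma> \<tau> q \<noteq> \<rho>"
  shows "Phi Q' \<sigma>' \<tau>' q = Phi Q \<sigma> \<tau> q"
proof -
  define m where "m = psi Q \<sigma> \<tau> q"
  have m: "m \<in> Mset Q \<sigma> \<tau>" "gsrc Q m = gsrc Q q" "gsig \<sigma> m = - gsig \<sigma> q"
    using psi_spec[OF q(1)] m_def by auto
  have phi_m: "phi Q \<sigma> \<tau> m \<noteq> \<rho>" using assms(3) m_def unfolding Phi_def by simp
  have m': "m \<in> Mset Q' \<sigma>' \<tau>'"
    using Mset_completion[OF m(1)] phi_m phi_eq_rho_iff[OF m(1)] gamma_fits_src_psi_iff[OF q(1)] q(2) m_def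
    by blast
  have q': "q \<in> Nset Q' \<sigma>' \<tau>'" using Nset_completion q by simp
  have "psi Q' \<sigma>' \<tau>' q = m"
    by (rule Q'.psi_eqI[OF q' m']) (use m ports_completion[of m] ports_completion[of q] q(1) in simp_all)
  moreover have "phi Q' \<sigma>' \<tau>' m = phi Q \<sigma> \<tau> m"
  proof -
    have p: "phi Q \<sigma> \<tau> m \<in> Nset Q \<sigma> \<tau>" "gtgt Q (phi Q \<sigma> \<tau> m) = gtgt Q m"
      "gtau \<tau> (phi Q \<sigma> \<tau> m) = - gtau \<tau> m" using phi_spec[OF m(1)] by auto
    have p': "phi Q \<sigma> \<tau> m \<in> Nset Q' \<sigma>' \<tau>'" using Nset_completion p(1) phi_m by simp
    show ?thesis
      by (rule Q'.phi_eqI[OF m' p']) (use p ports_completion[of m] ports_completion[of "phi Q \<sigma> \<tau> m"] m(1) in simp_all)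
  qed
  ultimately show ?thesis unfolding Phi_def m_def by simp
qed

text \<open>If \<open>\<Phi> q = \<rho>\<close>, the permitted path \<open>\<psi> q\<close> of \<open>Q\<close> is no longer maximal: it extends through
  \<open>\<gamma>\<close> by \<open>\<psi> \<rho>\<close>, to the permitted path \<open>glue (\<psi> \<rho>) (\<psi> q)\<close> of the completion.\<close>

definition glue :: "('v,'a) gpath \<Rightarrow> ('v,'a) gpath \<Rightarrow> ('v,'a) gpath" where
  "glue m1 m2 = Path (arrows m1 @ \<gamma> # arrows m2)"

lemma glue_steps:
  assumes m: "m1 \<in> Mset Q \<sigma> \<tau>" "m2 \<in> Mset Q \<sigma> \<tau>" and fits: "gamma_fits_src m1" "gamma_fits_tgt m2"
  shows "successively (permitted_step Q') (arrows m1 @ \<gamma> # arrows m2)"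
proof -
  have "successively (permitted_step Q') (arrows m1)" "successively (permitted_step Q') (arrows m2)"
    using Mset_arrows[OF m(1)] Mset_arrows[OF m(2)] fresh successively_permitted_step_completion_iff by auto
  moreover have "arrows m1 = [] \<or> permitted_step Q' (last (arrows m1)) \<gamma>"
    using permitted_step_last_gamma_iff[OF m(1)] fits(1) by blast
  moreover have "arrows m2 = [] \<or> permitted_step Q' \<gamma> (hd (arrows m2))"
    using permitted_step_gamma_hd_iff[OF m(2)] fits(2) by blast
  ultimately show ?thesis by (auto simp: successively_append_iff successively_Cons)
qed

lemma glue_no_step_before:
  assumes m: "m1 \<in> Mset Q \<sigma> \<tau>" and "gamma_fits_src m1" "\<not> gamma_fits_tgt m1"
  shows "\<not> permitted_step Q' a (hd (arrows m1 @ \<gamma> # L))"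
proof (cases "arrows m1 = []")
  case True
  then have m1: "m1 = PTriv (src Q \<beta>) (- \<sigma> \<beta>)"
    using Mset_arrows_Nil[OF m] assms(2) unfolding gamma_fits_src_def by auto
  show ?thesis
  proof (cases "a = \<gamma>")
    case True
    have "\<not> (tgt Q \<alpha> = src Q \<beta> \<and> \<sigma> \<beta> = - \<tau> \<alpha>)" using assms(3) m1 unfolding gamma_fits_tgt_def by auto
    then show ?thesis using True \<open>arrows m1 = []\<close> permitted_step_gamma_gamma_iff by simp
  next
    case False
    have "\<not> (\<exists>a\<in>arrs Q. src Q a = src Q \<beta> \<and> \<sigma> a = - \<sigma> \<beta>)" using m m1 by (simp add: PTriv_in_Mset_iff)
    then have "\<not> permitted_step Q' a \<gamma>"
      using False permitted_step_gamma_right_iff[of a] unfolding permitted_step_def by auto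
    then show ?thesis using \<open>arrows m1 = []\<close> by simp
  qed
next
  case False
  have h: "hd (arrows m1) \<in> arrs Q" using Mset_arrows(1)[OF m] False by auto
  show ?thesis
  proof (cases "a = \<gamma>")
    case True
    then show ?thesis using False assms(3) permitted_step_gamma_hd_iff[OF m False] by simp
  next
    case a: False
    have "\<not> permitted_step Q a (hd (arrows m1))"
      using m Mset_arrows_ne[OF m False] Path_in_Mset_iff by (metis (no_types, lifting))
    then show ?thesis using False a h fresh permitted_step_completion_iff[of a "hd (arrows m1)"] by auto
  qed
qed

lemma glue_no_step_after:
  assumes m: "m2 \<in> Mset Q \<sigma> \<tau>" and "gamma_fits_tgt m2" "\<not> gamma_fits_src m2"
  shows "\<not> permitted_step Q' (last (L @ \<gamma> # arrows m2)) b"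
proof (cases "arrows m2 = []")
  case True
  then have m2: "m2 = PTriv (tgt Q \<alpha>) (\<tau> \<alpha>)"
    using Mset_arrows_Nil[OF m] assms(2) unfolding gamma_fits_tgt_def by auto
  show ?thesis
  proof (cases "b = \<gamma>")
    case True
    have "\<not> (tgt Q \<alpha> = src Q \<beta> \<and> \<sigma> \<beta> = - \<tau> \<alpha>)" using assms(3) m2 unfolding gamma_fits_src_def by auto
    then show ?thesis using True \<open>arrows m2 = []\<close> permitted_step_gamma_gamma_iff by simp
  next
    case False
    have "\<not> (\<exists>b\<in>arrs Q. tgt Q b = tgt Q \<alpha> \<and> \<tau> b = - \<tau> \<alpha>)" using m m2 by (simp add: PTriv_in_Mset_iff)
    then have "\<not> permitted_step Q' \<gamma> b"
      using False permitted_step_gamma_left_iff[of b] unfolding permitted_step_def by auto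
    then show ?thesis using \<open>arrows m2 = []\<close> by simp
  qed
next
  case False
  have l: "last (arrows m2) \<in> arrs Q" using Mset_arrows(1)[OF m] False by auto
  show ?thesis
  proof (cases "b = \<gamma>")
    case True
    then show ?thesis using False assms(3) permitted_step_last_gamma_iff[OF m False] by simp
  next
    case b: False
    have "\<not> permitted_step Q (last (arrows m2)) b"
      using m Mset_arrows_ne[OF m False] Path_in_Mset_iff by (metis (no_types, lifting))
    then show ?thesis using False b l fresh permitted_step_completion_iff[of "last (arrows m2)" b] by auto
  qed
qed

lemma glue_in_Mset_completion:
  assumes m: "m1 \<in> Mset Q \<sigma> \<tau>" "m2 \<in> Mset Q \<sigma> \<tau>"
    and fits: "gamma_fits_src m1" "gamma_fits_tgt m2" and "\<not> gamma_fits_tgt m1" "\<not> gamma_fits_src m2"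
  shows "glue m1 m2 \<in> Mset Q' \<sigma>' \<tau>'"
  unfolding glue_def Q'.Path_in_Mset_iff
  using glue_steps[OF assms(1-4)] glue_no_step_before[OF m(1) fits(1) assms(5)]
    glue_no_step_after[OF m(2) fits(2) assms(6)] Mset_arrows(1)[OF m(1)] Mset_arrows(1)[OF m(2)]
  by auto

lemma glue_ports:
  assumes m: "m1 \<in> Mset Q \<sigma> \<tau>" "m2 \<in> Mset Q \<sigma> \<tau>" and "gamma_fits_src m1" "gamma_fits_tgt m2"
  shows "gtgt Q' (glue m1 m2) = gtgt Q m1" "gtau \<tau>' (glue m1 m2) = gtau \<tau> m1"
    "gsrc Q' (glue m1 m2) = gsrc Q m2" "gsig \<sigma>' (glue m1 m2) = gsig \<sigma> m2"
proof -
  have "gtgt Q' (glue m1 m2) = gtgt Q m1 \<and> gtau \<tau>' (glue m1 m2) = gtau \<tau> m1"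
  proof (cases "arrows m1 = []")
    case True
    then show ?thesis using Mset_arrows_Nil[OF m(1)] assms(3)
      unfolding glue_def gamma_fits_src_def by (auto simp: completion_signs)
  next
    case False
    then obtain ws where ws: "m1 = Path ws" "ws \<noteq> []" using Mset_arrows_ne[OF m(1)] by (auto simp: arrows_def)
    have "set ws \<subseteq> arrs Q" using Mset_arrows(1)[OF m(1)] ws(1) by (simp add: arrows_def)
    then have "hd ws \<noteq> \<gamma>" using hd_in_set[OF ws(2)] fresh by blast
    then show ?thesis using ws by (simp add: glue_def arrows_def completion_signs)
  qed
  moreover have "gsrc Q' (glue m1 m2) = gsrc Q m2 \<and> gsig \<sigma>' (glue m1 m2) = gsig \<sigma> m2"
  proof (cases "arrows m2 = []")
    case True
    then show ?thesis using Mset_arrows_Nil[OF m(2)] assms(4)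
      unfolding glue_def gamma_fits_tgt_def by (auto simp: completion_signs)
  next
    case False
    then obtain ws where ws: "m2 = Path ws" "ws \<noteq> []" using Mset_arrows_ne[OF m(2)] by (auto simp: arrows_def)
    have "set ws \<subseteq> arrs Q" using Mset_arrows(1)[OF m(2)] ws(1) by (simp add: arrows_def)
    then have "last ws \<noteq> \<gamma>" using last_in_set[OF ws(2)] fresh by blast
    then show ?thesis using ws by (simp add: glue_def arrows_def completion_signs)
  qed
  ultimately show "gtgt Q' (glue m1 m2) = gtgt Q m1" "gtau \<tau>' (glue m1 m2) = gtau \<tau> m1"
    "gsrc Q' (glue m1 m2) = gsrc Q m2" "gsig \<sigma>' (glue m1 m2) = gsig \<sigma> m2" by auto
qed

lemma Phi_completion_skip_rho:
  assumes q: "q \<in> Nset Q \<sigma> \<tau>" "q \<noteq> \<rho>" and "Phi Q \<sigma> \<tau> q = \<rho>" and "Phi Q \<sigma> \<tau> \<rho> \<noteq> \<rho>"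
  shows "Phi Q' \<sigma>' \<tau>' q = Phi Q \<sigma> \<tau> \<rho>"
proof -
  define m0 m where "m0 = psi Q \<sigma> \<tau> \<rho>" and "m = psi Q \<sigma> \<tau> q"
  have m0: "m0 \<in> Mset Q \<sigma> \<tau>" "gamma_fits_src m0" "\<not> gamma_fits_tgt m0"
    using psi_spec[OF rho_in_Nset] gamma_fits_src_psi_iff[OF rho_in_Nset] Phi_rho_eq_rho_iff assms(4) m0_def
    by auto
  have m: "m \<in> Mset Q \<sigma> \<tau>" "gamma_fits_tgt m" "\<not> gamma_fits_src m"
    using psi_spec[OF q(1)] gamma_fits_src_psi_iff[OF q(1)] q(2) phi_eq_rho_iff assms(3) m_def
    unfolding Phi_def by auto
  note c = glue_in_Mset_completion[OF m0(1) m(1) m0(2) m(2) m0(3) m(3)]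
  note c_ports = glue_ports[OF m0(1) m(1) m0(2) m(2)]
  have q': "q \<in> Nset Q' \<sigma>' \<tau>'" using Nset_completion q by simp
  have "psi Q' \<sigma>' \<tau>' q = glue m0 m"
    by (rule Q'.psi_eqI[OF q' c]) (use c_ports psi_spec[OF q(1)] ports_completion[of q] q(1) m_def in simp_all)
  moreover have "phi Q' \<sigma>' \<tau>' (glue m0 m) = Phi Q \<sigma> \<tau> \<rho>"
  proof -
    have p: "Phi Q \<sigma> \<tau> \<rho> \<in> Nset Q \<sigma> \<tau>" "gtgt Q (Phi Q \<sigma> \<tau> \<rho>) = gtgt Q m0"
      "gtau \<tau> (Phi Q \<sigma> \<tau> \<rho>) = - gtau \<tau> m0" using phi_spec[OF m0(1)] m0_def unfolding Phi_def by auto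
    have p': "Phi Q \<sigma> \<tau> \<rho> \<in> Nset Q' \<sigma>' \<tau>'" using Nset_completion p(1) assms(4) by simp
    show ?thesis
      by (rule Q'.phi_eqI[OF c p']) (use p c_ports ports_completion[of "Phi Q \<sigma> \<tau> \<rho>"] in simp_all)
  qed
  ultimately show ?thesis unfolding Phi_def by simp
qed

lemma Phi_completion:
  assumes "Phi Q \<sigma> \<tau> \<rho> \<noteq> \<rho>" "q \<in> Nset Q \<sigma> \<tau> - {\<rho>}"
  shows "Phi Q' \<sigma>' \<tau>' q = (if Phi Q \<sigma> \<tau> q = \<rho> then Phi Q \<sigma> \<tau> \<rho> else Phi Q \<sigma> \<tau> q)"
  using Phi_completion_eq_Phi Phi_completion_skip_rho assms by auto

end

theorem lemma4p1:
  fixes Q :: "('v,'a) quiv" and \<sigma> \<tau> :: "'a \<Rightarrow> int" and \<alpha> \<beta> \<gamma> :: 'a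
  assumes "gentle Q" and "sign_fns Q \<sigma> \<tau>" and "isolated Q \<sigma> \<tau> \<alpha> \<beta>" and "\<gamma> \<notin> arrs Q"
  defines "Q' \<equiv> complete Q \<alpha> \<beta> \<gamma>"
    and "\<sigma>' \<equiv> \<sigma>(\<gamma> := \<tau> \<alpha>)"
    and "\<tau>' \<equiv> \<tau>(\<gamma> := \<sigma> \<beta>)"
    and "\<rho> \<equiv> Path [\<alpha>, \<beta>]"
    and "Orb \<equiv> orbit_on (Nset Q \<sigma> \<tau>) (Phi Q \<sigma> \<tau>) (Path [\<alpha>, \<beta>])"
  shows "(gentle Q' \<longleftrightarrow> Orb \<noteq> {\<rho>}) \<and>
         (Orb \<noteq> {\<rho>} \<longrightarrow>
            Nset Q' \<sigma>' \<tau>' = Nset Q \<sigma> \<tau> - {\<rho>} \<and>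
            Norbits Q' \<sigma>' \<tau>' = {O' \<in> Norbits Q \<sigma> \<tau>. O' \<noteq> Orb} \<union> {Orb - {\<rho>}} \<and>
            Cset Q' \<sigma>' \<tau>' = Cset Q \<sigma> \<tau> \<union> {\<alpha>, \<beta>, \<gamma>} \<and>
            Corbits Q' \<sigma>' \<tau>' = Corbits Q \<sigma> \<tau> \<union> {{\<alpha>, \<beta>, \<gamma>}})"
proof -
  interpret C: isolated_completion Q \<sigma> \<tau> \<alpha> \<beta> \<gamma>
    using assms(1-4) by unfold_locales
  have signs: "C.\<sigma>' = \<sigma>'" "C.\<tau>' = \<tau>'" unfolding C.\<sigma>'_def C.\<tau>'_def \<sigma>'_def \<tau>'_def by simp_all
  interpret N: finite_perm "Nset Q \<sigma> \<tau>" "Phi Q \<sigma> \<tau>" by (rule C.finite_perm_Phi)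
  have orbit_rho: "Orb \<noteq> {\<rho>} \<longleftrightarrow> Phi Q \<sigma> \<tau> \<rho> \<noteq> \<rho>"
    using N.orbit_on_eq_singleton_iff[OF C.rho_in_Nset] unfolding Orb_def \<rho>_def by simp
  show ?thesis
  proof (intro conjI impI)
    show "gentle Q' \<longleftrightarrow> Orb \<noteq> {\<rho>}" using C.gentle_completion_iff orbit_rho unfolding Q'_def \<rho>_def by simp
    assume "Orb \<noteq> {\<rho>}"
    then have moved: "Phi Q \<sigma> \<tau> \<rho> \<noteq> \<rho>" using orbit_rho by simp
    show N': "Nset Q' \<sigma>' \<tau>' = Nset Q \<sigma> \<tau> - {\<rho>}"
      using C.Nset_completion unfolding Q'_def \<rho>_def signs .
    interpret perm_skip "Nset Q \<sigma> \<tau>" "Phi Q \<sigma> \<tau>" \<rho> "Phi Q' \<sigma>' \<tau>'"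
      using C.rho_in_Nset moved C.Phi_completion[OF moved[unfolded \<rho>_def]]
      unfolding Q'_def \<rho>_def signs by unfold_locales auto
    show "Norbits Q' \<sigma>' \<tau>' = {O' \<in> Norbits Q \<sigma> \<tau>. O' \<noteq> Orb} \<union> {Orb - {\<rho>}}"
      using orbits_skip unfolding Norbits_def N' Orb_def \<rho>_def .
    show "Cset Q' \<sigma>' \<tau>' = Cset Q \<sigma> \<tau> \<union> {\<alpha>, \<beta>, \<gamma>}"
      using C.Cset_completion unfolding Q'_def signs .
    show "Corbits Q' \<sigma>' \<tau>' = Corbits Q \<sigma> \<tau> \<union> {{\<alpha>, \<beta>, \<gamma>}}"
      using C.Corbits_completion unfolding Q'_def signs .
  qed
qed

end
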